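(* Suppose Assumptions 1–3 hold. For $p\in[1,\infty]$, any estimator $\hat\theta_{\ell_p}$ that minimizes $\|\hat g(\theta)\|_p$ over $\Theta$ satisfies, for all small enough $\gamma>0$, $$\hat g(\hat\theta_{\ell_p})=O_p\Big(\frac{m^3s^2}{n^{1-\gamma}}\Big).$$
   Context: Let $(Y_i,W_i,Z_i)$, $i=1,\dots,n$, be i.i.d. draws of $(Y,W,Z)$ with $Y\in\mathbb{R}$, $W\in\mathbb{R}^k$, $Z\in\mathbb{R}^k$. Fix $\tau\in(0,1)$ and $\Theta\subset\mathbb{R}^k$. Define $g(\theta)=E[(1\{Y\le W'\theta\}-\tau)Z]$, $\hat g(\theta)=\frac1n\sum_{i=1}^n(1\{Y_i\le W_i'\theta\}-\tau)Z_i$, $G(\theta)=\partial_\theta g(\theta)$. Assumption 1: (1.1) $\theta_0$ is the unique solution of $g(\theta)=0$ over $\Theta$, and $\theta_0$ is in the interior of the compact set $\Theta$; (1.2) $G(\theta_0)$ is well defined and has full rank. Assumption 2: (2.1) there is $m<\infty$ with $\|Z\|<m$ and $\|W\|<m$ a.s.; (2.2) $\|W\|>0$ a.s. and $W/\|W\|\in\{\tilde w_1,\dots,\tilde w_s\}\subset\mathbb{R}^k$ a.s., with $s\ll n$. Assumption 3: (3.1) the conditional density $f_Y(y\mid W,Z)$ exists and is a.s. uniformly bounded in $y$ on the support of $Y$ by $\bar f$; (3.2) $f_Y(y\mid W,Z)$ is a.s. twice continuously differentiable on the support of $Y$. ($\bar f$ is treated as a constant.) *)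

theory Defs
  imports "HOL-Probability.Probability"
begin

definition lp_norm :: "ereal \<Rightarrow> real^'k \<Rightarrow> real" where
  "lp_norm p x = (if p = \<infinity> then Max (range (\<lambda>i. \<bar>x $ i\<bar>))
      else (\<Sum>i\<in>UNIV. \<bar>x $ i\<bar> powr real_of_ereal p) powr (1 / real_of_ereal p))"

definition ghat :: "real \<Rightarrow> (nat \<Rightarrow> 'a \<Rightarrow> real) \<Rightarrow> (nat \<Rightarrow> 'a \<Rightarrow> real^'k) \<Rightarrow> (nat \<Rightarrow> 'a \<Rightarrow> real^'k)
     \<Rightarrow> nat \<Rightarrow> real^'k \<Rightarrow> 'a \<Rightarrow> real^'k" where
  "ghat tau Y W Z n \<theta> \<omega> =
     (1 / real n) *\<^sub>R (\<Sum>i<n. ((if Y i \<omega> \<le> W i \<omega> \<bullet> \<theta> then 1 else 0) - tau) *\<^sub>R Z i \<omega>)"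

definition gpop :: "'a measure \<Rightarrow> real \<Rightarrow> ('a \<Rightarrow> real) \<Rightarrow> ('a \<Rightarrow> real^'k) \<Rightarrow> ('a \<Rightarrow> real^'k)
     \<Rightarrow> real^'k \<Rightarrow> real^'k" where
  "gpop M tau Y W Z \<theta> =
     integral\<^sup>L M (\<lambda>\<omega>. ((if Y \<omega> \<le> W \<omega> \<bullet> \<theta> then 1 else 0) - tau) *\<^sub>R Z \<omega>)"

definition bigOp :: "'a measure \<Rightarrow> (nat \<Rightarrow> 'a \<Rightarrow> 'b::real_normed_vector) \<Rightarrow> (nat \<Rightarrow> real) \<Rightarrow> bool" where
  "bigOp M X a \<longleftrightarrow> (\<forall>\<epsilon>>0. \<exists>C N. \<forall>n\<ge>N.
      measure M {\<omega>\<in>space M. norm (X n \<omega>) > C * a n} < \<epsilon>)"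

definition rv_support :: "'a measure \<Rightarrow> ('a \<Rightarrow> real) \<Rightarrow> real set" where
  "rv_support M Y = {y. \<forall>e>0. measure M {\<omega>\<in>space M. \<bar>Y \<omega> - y\<bar> < e} > 0}"

definition C2_on :: "real set \<Rightarrow> (real \<Rightarrow> real) \<Rightarrow> bool" where
  "C2_on S h \<longleftrightarrow> (\<exists>h1 h2. (\<forall>y\<in>S. (h has_real_derivative h1 y) (at y within S)
      \<and> (h1 has_real_derivative h2 y) (at y within S)) \<and> continuous_on S h2)"

end

theory Submission
  imports Defs
begin

text \<open>
  Replace the indicator in the sample moment by a ramp of width 1/n^2; the resulting smoothed
  moment is continuous in theta.  A uniform law of large numbers on a ball around theta0 (finite
  nets, Hoeffding's inequality and the density bound P(|Y - W'theta| <= delta) <= 3 fbar delta)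
  makes it uniformly close to g, so, g'(theta0) being invertible, Brouwer's fixed point theorem
  yields a zero theta* of the smoothed moment inside the ball.  The exact and the smoothed moment
  at theta* differ only through observations within 1/n^2 of the hyperplane Y = W'theta*; by
  independence and the density bound, with probability approaching one at most 2k observations
  are that close to any such hyperplane, so the sample moment at theta* is at most 2km/n.  The
  l_p-minimality of the estimator transfers this bound, up to powers of k, to the estimator,
  which gives the rate O_p(1/n), stronger than the one claimed.
\<close>

section \<open>Comparing l_p norms on R^k\<close>

lemma abs_nth_le_lp_norm:
  fixes x :: "real^'k"
  assumes "1 \<le> p"
  shows "\<bar>x $ i\<bar> \<le> lp_norm p x"
proof (cases "p = \<infinity>")
  case True
  then show ?thesis by (auto simp: lp_norm_def intro: Max_ge)
next
  case False
  then obtain r where r: "p = ereal r" "1 \<le> r" using assms by (cases p) auto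
  have "\<bar>x $ i\<bar> = (\<bar>x $ i\<bar> powr r) powr (1/r)" using r by (simp add: powr_powr)
  also have "\<dots> \<le> (\<Sum>j\<in>UNIV. \<bar>x $ j\<bar> powr r) powr (1/r)"
    using r by (intro powr_mono2 member_le_sum) auto
  finally show ?thesis using r by (simp add: lp_norm_def)
qed

lemma norm_le_card_mult_lp_norm:
  fixes x :: "real^'k"
  assumes "1 \<le> p"
  shows "norm x \<le> CARD('k) * lp_norm p x"
proof -
  have "norm x \<le> (\<Sum>i\<in>UNIV. \<bar>x $ i\<bar>)" by (rule norm_le_l1_cart)
  also have "\<dots> \<le> (\<Sum>i\<in>(UNIV::'k set). lp_norm p x)"
    using assms by (intro sum_mono abs_nth_le_lp_norm)
  finally show ?thesis by simp
qed

lemma lp_norm_le_card_mult_norm: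
  fixes x :: "real^'k"
  assumes "1 \<le> p"
  shows "lp_norm p x \<le> CARD('k) * norm x"
proof (cases "p = \<infinity>")
  case True
  have "Max (range (\<lambda>i. \<bar>x $ i\<bar>)) \<le> norm x"
    by (auto simp: component_le_norm_cart)
  also have "\<dots> \<le> CARD('k) * norm x" by (simp add: mult_le_cancel_right1)
  finally show ?thesis using True by (simp add: lp_norm_def)
next
  case False
  then obtain r where r: "p = ereal r" "1 \<le> r" using assms by (cases p) auto
  have "(\<Sum>j\<in>UNIV. \<bar>x $ j\<bar> powr r) powr (1/r) \<le> (\<Sum>j\<in>(UNIV::'k set). norm x powr r) powr (1/r)"
    using r by (intro powr_mono2 sum_mono sum_nonneg) (auto simp: component_le_norm_cart)
  also have "\<dots> = CARD('k) powr (1/r) * norm x"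
    using r by (simp add: powr_mult powr_powr)
  also have "\<dots> \<le> CARD('k) powr 1 * norm x"
    using r by (intro mult_right_mono powr_mono) auto
  finally show ?thesis using r False by (simp add: lp_norm_def)
qed

section \<open>Finite nets of balls\<close>

lemma lattice_point_near:
  fixes \<theta> c :: "real^'k" and d \<rho> :: real
  assumes d: "d > 0" and \<theta>: "norm (\<theta> - c) \<le> \<rho>"
  obtains j where "j \<in> PiE UNIV (\<lambda>_. {-\<lceil>\<rho> / d\<rceil>..\<lceil>\<rho> / d\<rceil>})"
    "norm (\<theta> - (c + (\<chi> l. d * of_int (j l)))) \<le> CARD('k) * d / 2"
proof
  define x where "x l = (\<theta> $ l - c $ l) / d" for l
  define j where "j l = round (x l)" for l
  have round: "\<bar>of_int (j l) - x l\<bar> \<le> 1 / 2" for l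
    unfolding j_def by (rule of_int_round_abs_le)
  have "j l \<in> {-\<lceil>\<rho> / d\<rceil>..\<lceil>\<rho> / d\<rceil>}" for l
  proof -
    have "\<bar>\<theta> $ l - c $ l\<bar> \<le> \<rho>"
      using component_le_norm_cart[of "\<theta> - c" l] \<theta> by simp
    then have "\<bar>x l\<bar> \<le> \<rho> / d" using d by (simp add: x_def abs_divide divide_right_mono)
    then have "\<bar>of_int (j l)\<bar> < of_int \<lceil>\<rho> / d\<rceil> + (1::real)"
      using round[of l] le_of_int_ceiling[of "\<rho> / d"] by linarith
    then show ?thesis by (simp add: abs_less_iff)
  qed
  then show "j \<in> PiE UNIV (\<lambda>_. {-\<lceil>\<rho> / d\<rceil>..\<lceil>\<rho> / d\<rceil>})" by auto
  have "norm (\<theta> - (c + (\<chi> l. d * of_int (j l)))) \<le> (\<Sum>l\<in>UNIV. \<bar>(\<theta> - (c + (\<chi> l. d * of_int (j l)))) $ l\<bar>)"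
    by (rule norm_le_l1_cart)
  also have "\<dots> = (\<Sum>l\<in>UNIV. d * \<bar>of_int (j l) - x l\<bar>)"
    using d by (intro sum.cong) (auto simp: x_def abs_mult[symmetric] field_simps abs_minus_commute)
  also have "\<dots> \<le> (\<Sum>l\<in>(UNIV::'k set). d / 2)"
    using d round by (intro sum_mono) (simp add: mult_left_mono[of _ "1/2", simplified])
  finally show "norm (\<theta> - (c + (\<chi> l. d * of_int (j l)))) \<le> CARD('k) * d / 2" by simp
qed

lemma cball_finite_net:
  fixes c :: "real^'k" and \<delta> \<rho> :: real
  assumes \<delta>: "\<delta> > 0" and \<rho>: "\<rho> > 0"
  obtains N where "finite N" "real (card N) \<le> (2 * \<rho> * CARD('k) / \<delta> + 3) ^ CARD('k)"
    "\<And>\<theta>. \<theta> \<in> cball c \<rho> \<Longrightarrow> \<exists>g\<in>N. norm (\<theta> - g) \<le> \<delta>"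
proof
  define d where "d = \<delta> / CARD('k)"
  have d: "d > 0" using \<delta> by (simp add: d_def)
  define J where "J = \<lceil>\<rho> / d\<rceil>"
  define P where "P = PiE (UNIV::'k set) (\<lambda>_. {-J..J})"
  define N where "N = (\<lambda>j. c + (\<chi> l. d * of_int (j l))) ` P"
  have "finite P" unfolding P_def by (intro finite_PiE) auto
  then show "finite N" unfolding N_def by simp
  have "J \<ge> 0" using divide_pos_pos[OF \<rho> d] by (simp add: J_def)
  have "real (card N) \<le> real (card P)"
    unfolding N_def using \<open>finite P\<close> card_image_le by simp
  also have "\<dots> = (2 * of_int J + 1) ^ CARD('k)"
    using \<open>J \<ge> 0\<close> by (simp add: P_def card_PiE)
  also have "\<dots> \<le> (2 * \<rho> * CARD('k) / \<delta> + 3) ^ CARD('k)"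
  proof (rule power_mono)
    have "of_int J \<le> \<rho> / d + 1" unfolding J_def by linarith
    then show "2 * of_int J + 1 \<le> 2 * \<rho> * CARD('k) / \<delta> + 3"
      using \<delta> by (simp add: d_def field_simps)
  qed (use \<open>J \<ge> 0\<close> in simp)
  finally show "real (card N) \<le> (2 * \<rho> * CARD('k) / \<delta> + 3) ^ CARD('k)" .
  fix \<theta> assume "\<theta> \<in> cball c \<rho>"
  then have "norm (\<theta> - c) \<le> \<rho>" by (simp add: dist_norm norm_minus_commute)
  then obtain j where "j \<in> P" "norm (\<theta> - (c + (\<chi> l. d * of_int (j l)))) \<le> CARD('k) * d / 2"
    using lattice_point_near[OF d] unfolding P_def J_def by blast
  moreover have "CARD('k) * d / 2 \<le> \<delta>" using \<delta> by (simp add: d_def)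
  ultimately show "\<exists>g\<in>N. norm (\<theta> - g) \<le> \<delta>" unfolding N_def by force
qed

section \<open>Zeros of perturbations of a map with invertible derivative\<close>

lemma zero_of_continuous_perturbation:
  fixes g :: "'a::euclidean_space \<Rightarrow> 'a"
  assumes deriv: "(g has_derivative L) (at x0)" and inj: "inj L" and zero: "g x0 = 0"
  obtains d c where "d > 0" "c > 0"
    "\<And>\<rho> h. 0 < \<rho> \<Longrightarrow> \<rho> < d \<Longrightarrow> continuous_on (cball x0 \<rho>) h \<Longrightarrow>
       (\<And>x. x \<in> cball x0 \<rho> \<Longrightarrow> norm (h x - g x) \<le> c * \<rho>) \<Longrightarrow> \<exists>x\<in>cball x0 \<rho>. h x = 0"
proof -
  have "linear L" using deriv by (rule has_derivative_linear)
  then obtain L' where L': "linear L'" "\<And>x. L' (L x) = x" "\<And>x. L (L' x) = x"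
    using linear_injective_isomorphism[OF _ inj] by auto
  obtain B where B: "B > 0" "\<And>v. norm (L' v) \<le> norm v * B"
    using bounded_linear.pos_bounded L'(1) unfolding linear_conv_bounded_linear by blast
  define c where "c = 1 / (2 * B)"
  have c: "c > 0" using B by (simp add: c_def)
  obtain d where d: "d > 0" and approx: "\<And>x. norm (x - x0) < d \<Longrightarrow>
      norm (g x - g x0 - L (x - x0)) \<le> c * norm (x - x0)"
    using deriv c unfolding has_derivative_at_alt by metis
  show ?thesis
  proof (rule that[OF d c])
    fix \<rho> and h :: "'a \<Rightarrow> 'a"
    assume \<rho>: "0 < \<rho>" "\<rho> < d" and cont: "continuous_on (cball x0 \<rho>) h"
      and close: "\<And>x. x \<in> cball x0 \<rho> \<Longrightarrow> norm (h x - g x) \<le> c * \<rho>"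
    \<comment> \<open>A zero of h is a fixed point of this Newton-type map.\<close>
    define \<Phi> where "\<Phi> x = x - L' (h x)" for x
    have "\<Phi> x \<in> cball x0 \<rho>" if x: "x \<in> cball x0 \<rho>" for x
    proof -
      have nx: "norm (x - x0) \<le> \<rho>" using x by (simp add: dist_norm norm_minus_commute)
      have "L' (L (x - x0) - g x) - L' (h x - g x) = L' (L (x - x0)) - L' (h x)"
        by (simp only: linear_diff[OF L'(1)]) simp
      then have "\<Phi> x - x0 = L' (L (x - x0) - g x) - L' (h x - g x)"
        by (simp add: \<Phi>_def L'(2))
      then have "norm (\<Phi> x - x0) \<le> norm (L' (L (x - x0) - g x)) + norm (L' (h x - g x))"
        by (simp only: norm_triangle_ineq4)
      also have "\<dots> \<le> norm (L (x - x0) - g x) * B + norm (h x - g x) * B"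
        by (intro add_mono B(2))
      also have "norm (L (x - x0) - g x) \<le> c * norm (x - x0)"
        using approx[of x] nx \<rho> zero by (simp add: norm_minus_commute)
      also have "norm (h x - g x) \<le> c * \<rho>" by (rule close[OF x])
      finally have "norm (\<Phi> x - x0) \<le> c * norm (x - x0) * B + c * \<rho> * B"
        using B by (simp add: mult_right_mono add_mono)
      also have "\<dots> \<le> \<rho>" using nx B by (simp add: c_def field_simps)
      finally show ?thesis by (simp add: dist_norm norm_minus_commute)
    qed
    moreover have "continuous_on (cball x0 \<rho>) \<Phi>"
      unfolding \<Phi>_def using cont linear_continuous_on L'(1) unfolding linear_conv_bounded_linear
      by (intro continuous_intros) (auto intro: continuous_on_compose2)
    ultimately obtain x where "x \<in> cball x0 \<rho>" "\<Phi> x = x"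
      using brouwer_ball[OF \<rho>(1)] by blast
    then show "\<exists>x\<in>cball x0 \<rho>. h x = 0"
      using L'(3)[of "h x"] linear_0[OF \<open>linear L\<close>] by (auto simp: \<Phi>_def)
  qed
qed

section \<open>Events of probability approaching one\<close>

definition holds_wpa1 :: "'a measure \<Rightarrow> (nat \<Rightarrow> 'a \<Rightarrow> bool) \<Rightarrow> bool" where
  "holds_wpa1 M P \<longleftrightarrow> (\<forall>\<epsilon>>0. \<forall>\<^sub>F n in sequentially.
     \<exists>B\<in>sets M. measure M B < \<epsilon> \<and> (\<forall>\<omega>\<in>space M - B. P n \<omega>))"

context prob_space
begin

lemma holds_wpa1I:
  assumes "b \<longlonglongrightarrow> 0"
    and "\<forall>\<^sub>F n in sequentially. \<exists>B\<in>events. prob B \<le> b n \<and> (\<forall>\<omega>\<in>space M - B. P n \<omega>)"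
  shows "holds_wpa1 M P"
  unfolding holds_wpa1_def
proof (intro allI impI)
  fix \<epsilon> :: real assume "\<epsilon> > 0"
  with assms(1) have "\<forall>\<^sub>F n in sequentially. b n < \<epsilon>" by (rule order_tendstoD(2))
  with assms(2) show "\<forall>\<^sub>F n in sequentially. \<exists>B\<in>events. prob B < \<epsilon> \<and> (\<forall>\<omega>\<in>space M - B. P n \<omega>)"
  proof eventually_elim
    case (elim n)
    then obtain B where "B \<in> events" "prob B \<le> b n" "\<forall>\<omega>\<in>space M - B. P n \<omega>" by blast
    with elim show ?case by (intro bexI[of _ B]) auto
  qed
qed

lemma holds_wpa1_AE:
  assumes "AE \<omega> in M. Q \<omega>"
  shows "holds_wpa1 M (\<lambda>_. Q)"
proof -
  obtain N where "{\<omega>\<in>space M. \<not> Q \<omega>} \<subseteq> N" "emeasure M N = 0" "N \<in> events"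
    using assms by (rule AE_E)
  then show ?thesis
    by (intro holds_wpa1I[where b="\<lambda>_. 0"]) (auto simp: measure_def intro!: bexI[of _ N])
qed

lemma holds_wpa1_conj:
  assumes "holds_wpa1 M P" "holds_wpa1 M Q"
  shows "holds_wpa1 M (\<lambda>n \<omega>. P n \<omega> \<and> Q n \<omega>)"
  unfolding holds_wpa1_def
proof (intro allI impI)
  fix \<epsilon> :: real assume "\<epsilon> > 0"
  then have \<epsilon>2: "\<epsilon> / 2 > 0" by simp
  have "\<forall>\<^sub>F n in sequentially. \<exists>B\<in>events. prob B < \<epsilon> / 2 \<and> (\<forall>\<omega>\<in>space M - B. P n \<omega>)"
    using assms(1) \<epsilon>2 unfolding holds_wpa1_def by blast
  moreover have "\<forall>\<^sub>F n in sequentially. \<exists>B\<in>events. prob B < \<epsilon> / 2 \<and> (\<forall>\<omega>\<in>space M - B. Q n \<omega>)"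
    using assms(2) \<epsilon>2 unfolding holds_wpa1_def by blast
  ultimately show "\<forall>\<^sub>F n in sequentially. \<exists>B\<in>events. prob B < \<epsilon> \<and> (\<forall>\<omega>\<in>space M - B. P n \<omega> \<and> Q n \<omega>)"
  proof eventually_elim
    case (elim n)
    then obtain B1 B2 where B1: "B1 \<in> events" "prob B1 < \<epsilon> / 2" "\<forall>\<omega>\<in>space M - B1. P n \<omega>"
      and B2: "B2 \<in> events" "prob B2 < \<epsilon> / 2" "\<forall>\<omega>\<in>space M - B2. Q n \<omega>" by blast
    have "prob (B1 \<union> B2) \<le> prob B1 + prob B2" using B1(1) B2(1) by (rule measure_Un_le)
    then show ?case using B1 B2 by (intro bexI[of _ "B1 \<union> B2"]) auto
  qed
qed

lemma holds_wpa1_finite_Ball: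
  assumes "finite I" "\<And>i. i \<in> I \<Longrightarrow> holds_wpa1 M (P i)"
  shows "holds_wpa1 M (\<lambda>n \<omega>. \<forall>i\<in>I. P i n \<omega>)"
  using assms
proof (induction I rule: finite_induct)
  case empty
  show ?case by (intro holds_wpa1I[where b="\<lambda>_. 0"]) (auto intro: bexI[of _ "{}"])
next
  case (insert i I)
  then show ?case using holds_wpa1_conj[of "P i" "\<lambda>n \<omega>. \<forall>i\<in>I. P i n \<omega>"] by simp
qed

lemma holds_wpa1_mono:
  assumes "holds_wpa1 M P" "\<forall>\<^sub>F n in sequentially. \<forall>\<omega>\<in>space M. P n \<omega> \<longrightarrow> Q n \<omega>"
  shows "holds_wpa1 M Q"
  unfolding holds_wpa1_def
proof (intro allI impI)
  fix \<epsilon> :: real assume "\<epsilon> > 0"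
  with assms(1) have "\<forall>\<^sub>F n in sequentially. \<exists>B\<in>events. prob B < \<epsilon> \<and> (\<forall>\<omega>\<in>space M - B. P n \<omega>)"
    by (simp add: holds_wpa1_def)
  with assms(2) show "\<forall>\<^sub>F n in sequentially. \<exists>B\<in>events. prob B < \<epsilon> \<and> (\<forall>\<omega>\<in>space M - B. Q n \<omega>)"
    by eventually_elim blast
qed

lemma prob_le_of_subset:
  assumes "A \<subseteq> B" "B \<in> events"
  shows "prob A \<le> prob B"
  using assms finite_measure_mono measure_notin_sets[of A M] by (cases "A \<in> events") auto

lemma bigOp_if_holds_wpa1:
  assumes "holds_wpa1 M (\<lambda>n \<omega>. norm (X n \<omega>) \<le> C * a n)"
  shows "bigOp M X a"
  unfolding bigOp_def
proof (intro allI impI)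
  fix \<epsilon> :: real assume "\<epsilon> > 0"
  with assms have "\<forall>\<^sub>F n in sequentially. \<exists>B\<in>events. prob B < \<epsilon> \<and> (\<forall>\<omega>\<in>space M - B. norm (X n \<omega>) \<le> C * a n)"
    by (simp add: holds_wpa1_def)
  then have "\<forall>\<^sub>F n in sequentially. prob {\<omega>\<in>space M. norm (X n \<omega>) > C * a n} < \<epsilon>"
  proof eventually_elim
    case (elim n)
    then obtain B where "B \<in> events" "prob B < \<epsilon>" "\<forall>\<omega>\<in>space M - B. norm (X n \<omega>) \<le> C * a n" by blast
    then show ?case using prob_le_of_subset[of "{\<omega>\<in>space M. norm (X n \<omega>) > C * a n}" B] by force
  qed
  then show "\<exists>C N. \<forall>n\<ge>N. prob {\<omega>\<in>space M. norm (X n \<omega>) > C * a n} < \<epsilon>"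
    unfolding eventually_sequentially by blast
qed

end

lemma (in prob_space) bigOp_powr_rate:
  fixes X :: "nat \<Rightarrow> 'a \<Rightarrow> 'b::real_normed_vector" and c K \<gamma> :: real
  assumes "holds_wpa1 M (\<lambda>n \<omega>. norm (X n \<omega>) \<le> c / n)" "0 \<le> c" "0 < K" "0 \<le> \<gamma>"
  shows "bigOp M X (\<lambda>n. K / real n powr (1 - \<gamma>))"
proof (rule bigOp_if_holds_wpa1[where C="c / K"], rule holds_wpa1_mono[OF assms(1)])
  have bound: "c / n \<le> c / K * (K / real n powr (1 - \<gamma>))" if "n > 0" for n :: nat
  proof -
    have "real n powr (1 - \<gamma>) \<le> real n powr 1"
      using that assms(4) by (intro powr_mono) auto
    then have "c / n \<le> c / real n powr (1 - \<gamma>)"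
      using that assms(2) by (intro divide_left_mono) auto
    then show ?thesis using assms(3) by simp
  qed
  show "\<forall>\<^sub>F n in sequentially. \<forall>\<omega>\<in>space M.
      norm (X n \<omega>) \<le> c / n \<longrightarrow> norm (X n \<omega>) \<le> c / K * (K / real n powr (1 - \<gamma>))"
    using eventually_gt_at_top[of 0]
  proof eventually_elim
    case (elim n)
    then show ?case using bound[OF elim] by (auto simp del: times_divide_eq_right)
  qed
qed

section \<open>Small-ball probabilities from a bounded conditional density\<close>

lemma set_integral_le_const_mult_length:
  fixes g :: "real \<Rightarrow> real"
  assumes "B \<subseteq> {a..b}" "a \<le> b" "0 \<le> c" "\<And>y. y \<in> B \<Longrightarrow> g y \<le> c"
  shows "(LINT y:B|lborel. g y) \<le> c * (b - a)"
proof (cases "integrable lborel (\<lambda>y. indicator B y *\<^sub>R g y)")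
  case True
  have "(LINT y:B|lborel. g y) \<le> integral\<^sup>L lborel (\<lambda>y. c * indicator {a..b} y)"
    unfolding set_lebesgue_integral_def
  proof (rule integral_mono[OF True])
    show "integrable lborel (\<lambda>y. c * indicator {a..b} y)"
      by (intro integrable_mult_right) (simp add: integrable_indicator_iff emeasure_lborel_Icc_eq)
  qed (use assms in \<open>auto simp: indicator_def\<close>)
  also have "\<dots> = c * (b - a)" using assms by simp
  finally show ?thesis .
next
  case False
  then show ?thesis using assms by (simp add: set_lebesgue_integral_def not_integrable_integral_eq)
qed

lemma strip_containing:
  fixes u y \<delta> R :: real
  assumes \<delta>: "\<delta> > 0" and u: "\<bar>u\<bar> \<le> R" and y: "\<bar>y - u\<bar> \<le> \<delta>"
  obtains j :: int where "j \<in> {-\<lceil>R / \<delta>\<rceil>..\<lceil>R / \<delta>\<rceil>}" "of_int j * \<delta> \<le> u" "u < (of_int j + 1) * \<delta>"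
    "y \<in> {of_int j * \<delta> - \<delta> .. of_int j * \<delta> + 2 * \<delta>}"
proof -
  define j where "j = \<lfloor>u / \<delta>\<rfloor>"
  have "\<bar>u\<bar> / \<delta> \<le> R / \<delta>" using \<delta> u by (simp add: divide_right_mono)
  also have "\<dots> \<le> of_int \<lceil>R / \<delta>\<rceil>" by (rule le_of_int_ceiling)
  finally have "\<bar>u / \<delta>\<bar> \<le> of_int \<lceil>R / \<delta>\<rceil>" using \<delta> by (simp add: abs_divide)
  then have "- of_int \<lceil>R / \<delta>\<rceil> \<le> u / \<delta>" "u / \<delta> \<le> of_int \<lceil>R / \<delta>\<rceil>"
    unfolding abs_le_iff by linarith+
  then have "j \<in> {-\<lceil>R / \<delta>\<rceil>..\<lceil>R / \<delta>\<rceil>}" by (simp add: j_def floor_le_iff le_floor_iff)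
  moreover have "of_int j \<le> u / \<delta>" "u / \<delta> < of_int j + 1" unfolding j_def by linarith+
  then have "of_int j * \<delta> \<le> u" "u < (of_int j + 1) * \<delta>"
    using \<delta> by (simp_all add: field_simps)
  moreover from this have "y \<in> {of_int j * \<delta> - \<delta> .. of_int j * \<delta> + 2 * \<delta>}"
    using y by (auto simp: abs_le_iff distrib_right)
  ultimately show ?thesis using that by blast
qed

context prob_space
begin

lemma rv_support_eq_Inter:
  assumes [measurable]: "Y \<in> borel_measurable M"
  defines "Q \<equiv> {(q, e). q \<in> \<rat> \<and> e \<in> \<rat> \<and> e > 0 \<and> prob {\<omega>\<in>space M. \<bar>Y \<omega> - q\<bar> < e} = 0}"
  shows "rv_support M Y = (\<Inter>x\<in>Q. {y. snd x \<le> \<bar>y - fst x\<bar>})"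
proof (intro equalityI subsetI)
  fix y assume y: "y \<in> rv_support M Y"
  show "y \<in> (\<Inter>x\<in>Q. {y. snd x \<le> \<bar>y - fst x\<bar>})"
  proof (clarsimp simp: Q_def)
    fix q e assume null: "prob {\<omega>\<in>space M. \<bar>Y \<omega> - q\<bar> < e} = 0"
    show "e \<le> \<bar>y - q\<bar>"
    proof (rule ccontr)
      assume "\<not> e \<le> \<bar>y - q\<bar>"
      then have "prob {\<omega>\<in>space M. \<bar>Y \<omega> - y\<bar> < e - \<bar>y - q\<bar>} > 0"
        using y by (auto simp: rv_support_def)
      moreover have "prob {\<omega>\<in>space M. \<bar>Y \<omega> - y\<bar> < e - \<bar>y - q\<bar>} \<le> prob {\<omega>\<in>space M. \<bar>Y \<omega> - q\<bar> < e}"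
        by (intro finite_measure_mono) auto
      ultimately show False using null by simp
    qed
  qed
next
  fix y assume y: "y \<in> (\<Inter>x\<in>Q. {y. snd x \<le> \<bar>y - fst x\<bar>})"
  show "y \<in> rv_support M Y"
    unfolding rv_support_def
  proof (intro CollectI allI impI)
    fix e :: real assume "e > 0"
    \<comment> \<open>Rational centre and radius, so that the ball is one of those in Q.\<close>
    obtain q where q: "q \<in> \<rat>" "y - e / 4 < q" "q < y + e / 4"
      using Rats_dense_in_real[of "y - e/4" "y + e/4"] \<open>e > 0\<close> by auto
    obtain e' where e': "e' \<in> \<rat>" "e / 4 < e'" "e' < e / 2"
      using Rats_dense_in_real[of "e/4" "e/2"] \<open>e > 0\<close> by auto
    have "(q, e') \<notin> Q" using y q e' by auto
    then have "prob {\<omega>\<in>space M. \<bar>Y \<omega> - q\<bar> < e'} \<noteq> 0" using q e' \<open>e > 0\<close> by (simp add: Q_def)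
    moreover have "prob {\<omega>\<in>space M. \<bar>Y \<omega> - q\<bar> < e'} \<le> prob {\<omega>\<in>space M. \<bar>Y \<omega> - y\<bar> < e}"
      using q e' by (intro finite_measure_mono) auto
    ultimately show "prob {\<omega>\<in>space M. \<bar>Y \<omega> - y\<bar> < e} > 0"
      using measure_nonneg[of M "{\<omega>\<in>space M. \<bar>Y \<omega> - q\<bar> < e'}"] by linarith
  qed
qed

lemma closed_rv_support:
  assumes "Y \<in> borel_measurable M"
  shows "closed (rv_support M Y)"
  unfolding rv_support_eq_Inter[OF assms]
  by (intro closed_INT ballI closed_Collect_le continuous_intros)

lemma AE_in_rv_support:
  assumes [measurable]: "Y \<in> borel_measurable M"
  shows "AE \<omega> in M. Y \<omega> \<in> rv_support M Y"
proof -
  define Q where "Q = {(q, e). q \<in> \<rat> \<and> e \<in> \<rat> \<and> e > 0 \<and> prob {\<omega>\<in>space M. \<bar>Y \<omega> - q\<bar> < e} = 0}"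
  have "countable Q"
    by (rule countable_subset[of Q "\<rat> \<times> \<rat>"]) (auto simp: Q_def countable_rat)
  then have "AE \<omega> in M. \<forall>x\<in>Q. snd x \<le> \<bar>Y \<omega> - fst x\<bar>"
  proof (subst AE_ball_countable[OF \<open>countable Q\<close>], intro ballI)
    fix x assume "x \<in> Q"
    then have "prob {\<omega>\<in>space M. \<bar>Y \<omega> - fst x\<bar> < snd x} = 0" by (auto simp: Q_def)
    then show "AE \<omega> in M. snd x \<le> \<bar>Y \<omega> - fst x\<bar>"
      by (subst (asm) prob_Collect_eq_0) (auto simp: not_less)
  qed
  then show ?thesis by (simp add: rv_support_eq_Inter[OF assms] Q_def)
qed

lemma prob_slab_le_density_bound:
  fixes Y :: "'a \<Rightarrow> real" and W Z :: "'a \<Rightarrow> real^'k" and f :: "real^'k \<Rightarrow> real^'k \<Rightarrow> real \<Rightarrow> real"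
  assumes [measurable]: "Y \<in> borel_measurable M" "W \<in> borel_measurable M" "Z \<in> borel_measurable M"
    and f_dens: "\<And>A B. A \<in> sets borel \<Longrightarrow> B \<in> sets borel \<Longrightarrow>
        prob {\<omega>\<in>space M. (W \<omega>, Z \<omega>) \<in> A \<and> Y \<omega> \<in> B}
        = integral\<^sup>L M (\<lambda>\<omega>. indicator A (W \<omega>, Z \<omega>) * (LINT y:B|lborel. f (W \<omega>) (Z \<omega>) y))"
    and f_bnd: "AE \<omega> in M. \<forall>y\<in>rv_support M Y. f (W \<omega>) (Z \<omega>) y \<le> fb" and fb: "0 \<le> fb"
    and A[measurable]: "A \<in> sets borel" and ab: "a \<le> b"
  shows "prob {\<omega>\<in>space M. (W \<omega>, Z \<omega>) \<in> A \<and> Y \<omega> \<in> {a..b}} \<le> fb * (b - a) * prob {\<omega>\<in>space M. (W \<omega>, Z \<omega>) \<in> A}"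
proof -
  define S where "S = rv_support M Y"
  have [measurable]: "S \<in> sets borel" unfolding S_def using closed_rv_support by measurable
  have Ameas: "{\<omega>\<in>space M. (W \<omega>, Z \<omega>) \<in> A} \<in> events" by measurable
  \<comment> \<open>The density is only bounded on the support of Y, which carries all the mass of Y.\<close>
  have "AE \<omega> in M. Y \<omega> \<in> S" unfolding S_def by (rule AE_in_rv_support) fact
  then have "AE \<omega> in M. \<omega> \<in> {\<omega>\<in>space M. (W \<omega>, Z \<omega>) \<in> A \<and> Y \<omega> \<in> {a..b}}
      \<longleftrightarrow> \<omega> \<in> {\<omega>\<in>space M. (W \<omega>, Z \<omega>) \<in> A \<and> Y \<omega> \<in> {a..b} \<inter> S}"
    by eventually_elim auto
  then have "prob {\<omega>\<in>space M. (W \<omega>, Z \<omega>) \<in> A \<and> Y \<omega> \<in> {a..b}}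
      = prob {\<omega>\<in>space M. (W \<omega>, Z \<omega>) \<in> A \<and> Y \<omega> \<in> {a..b} \<inter> S}"
    by (rule measure_eq_AE) measurable
  also have "\<dots> = integral\<^sup>L M (\<lambda>\<omega>. indicator A (W \<omega>, Z \<omega>) * (LINT y:({a..b} \<inter> S)|lborel. f (W \<omega>) (Z \<omega>) y))"
    using A by (intro f_dens) auto
  also have "\<dots> \<le> integral\<^sup>L M (\<lambda>\<omega>. indicator {\<omega>\<in>space M. (W \<omega>, Z \<omega>) \<in> A} \<omega> * (fb * (b - a)))"
  proof (rule integral_mono_AE')
    show "integrable M (\<lambda>\<omega>. indicator {\<omega>\<in>space M. (W \<omega>, Z \<omega>) \<in> A} \<omega> * (fb * (b - a)))"
      using Ameas by (intro integrable_mult_left) (simp add: integrable_indicator_iff emeasure_eq_measure)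
    show "AE \<omega> in M. 0 \<le> indicator {\<omega>\<in>space M. (W \<omega>, Z \<omega>) \<in> A} \<omega> * (fb * (b - a))"
      using fb ab by auto
    show "AE \<omega> in M. indicator A (W \<omega>, Z \<omega>) * (LINT y:({a..b} \<inter> S)|lborel. f (W \<omega>) (Z \<omega>) y)
        \<le> indicator {\<omega>\<in>space M. (W \<omega>, Z \<omega>) \<in> A} \<omega> * (fb * (b - a))"
      using f_bnd
    proof (rule AE_mp, intro AE_I2 impI)
      fix \<omega> assume "\<omega> \<in> space M" and "\<forall>y\<in>rv_support M Y. f (W \<omega>) (Z \<omega>) y \<le> fb"
      moreover from this have "(LINT y:({a..b} \<inter> S)|lborel. f (W \<omega>) (Z \<omega>) y) \<le> fb * (b - a)"
        using fb ab by (intro set_integral_le_const_mult_length) (auto simp: S_def)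
      ultimately show "indicator A (W \<omega>, Z \<omega>) * (LINT y:({a..b} \<inter> S)|lborel. f (W \<omega>) (Z \<omega>) y)
          \<le> indicator {\<omega>\<in>space M. (W \<omega>, Z \<omega>) \<in> A} \<omega> * (fb * (b - a))"
        by (auto simp: indicator_def)
    qed
  qed
  also have "\<dots> = fb * (b - a) * prob {\<omega>\<in>space M. (W \<omega>, Z \<omega>) \<in> A}"
    using A by simp
  finally show ?thesis .
qed

lemma prob_near_hyperplane_le:
  fixes Y :: "'a \<Rightarrow> real" and W Z :: "'a \<Rightarrow> real^'k" and f :: "real^'k \<Rightarrow> real^'k \<Rightarrow> real \<Rightarrow> real"
  assumes meas[measurable]: "Y \<in> borel_measurable M" "W \<in> borel_measurable M" "Z \<in> borel_measurable M"
    and bndW: "AE \<omega> in M. norm (W \<omega>) < m"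
    and f_dens: "\<And>A B. A \<in> sets borel \<Longrightarrow> B \<in> sets borel \<Longrightarrow>
        prob {\<omega>\<in>space M. (W \<omega>, Z \<omega>) \<in> A \<and> Y \<omega> \<in> B}
        = integral\<^sup>L M (\<lambda>\<omega>. indicator A (W \<omega>, Z \<omega>) * (LINT y:B|lborel. f (W \<omega>) (Z \<omega>) y))"
    and f_bnd: "AE \<omega> in M. \<forall>y\<in>rv_support M Y. f (W \<omega>) (Z \<omega>) y \<le> fb" and fb: "0 \<le> fb"
    and \<delta>: "\<delta> > 0"
  shows "prob {\<omega>\<in>space M. \<bar>Y \<omega> - W \<omega> \<bullet> \<theta>\<bar> \<le> \<delta>} \<le> 3 * fb * \<delta>"
proof -
  \<comment> \<open>Slice by the value of W \<bullet> \<theta> into strips of width \<delta>; on a strip, Y ranges over an interval of length 3\<delta>.\<close>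
  define strip where "strip j = {p :: (real^'k) \<times> (real^'k).
    of_int j * \<delta> \<le> fst p \<bullet> \<theta> \<and> fst p \<bullet> \<theta> < (of_int j + 1) * \<delta>}" for j :: int
  define F where "F j = {\<omega>\<in>space M. (W \<omega>, Z \<omega>) \<in> strip j}" for j
  define E where "E j = {\<omega>\<in>space M. (W \<omega>, Z \<omega>) \<in> strip j \<and>
    Y \<omega> \<in> {of_int j * \<delta> - \<delta> .. of_int j * \<delta> + 2 * \<delta>}}" for j
  have strip_borel[measurable]: "strip j \<in> sets borel" for j
  proof -
    have "closed {p :: (real^'k) \<times> (real^'k). of_int j * \<delta> \<le> fst p \<bullet> \<theta>}"
      by (intro closed_Collect_le continuous_intros)
    moreover have "open {p :: (real^'k) \<times> (real^'k). fst p \<bullet> \<theta> < (of_int j + 1) * \<delta>}"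
      by (intro open_Collect_less continuous_intros)
    ultimately show ?thesis
      unfolding strip_def Collect_conj_eq by (intro sets.Int borel_closed borel_open)
  qed
  have E_events[measurable]: "E j \<in> events" and F_events[measurable]: "F j \<in> events" for j
    unfolding E_def F_def by measurable
  have far_events[measurable]: "{\<omega>\<in>space M. \<not> norm (W \<omega>) < m} \<in> events" by measurable
  define J where "J = \<lceil>\<bar>m\<bar> * norm \<theta> / \<delta>\<rceil>"
  have cover: "{\<omega>\<in>space M. \<bar>Y \<omega> - W \<omega> \<bullet> \<theta>\<bar> \<le> \<delta>}
      \<subseteq> (\<Union>j\<in>{-J..J}. E j) \<union> {\<omega>\<in>space M. \<not> norm (W \<omega>) < m}"
  proof
    fix \<omega> assume \<omega>: "\<omega> \<in> {\<omega>\<in>space M. \<bar>Y \<omega> - W \<omega> \<bullet> \<theta>\<bar> \<le> \<delta>}"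
    show "\<omega> \<in> (\<Union>j\<in>{-J..J}. E j) \<union> {\<omega>\<in>space M. \<not> norm (W \<omega>) < m}"
    proof (cases "norm (W \<omega>) < m")
      case True
      have "\<bar>W \<omega> \<bullet> \<theta>\<bar> \<le> norm (W \<omega>) * norm \<theta>" by (rule Cauchy_Schwarz_ineq2)
      also have "\<dots> \<le> \<bar>m\<bar> * norm \<theta>" using True by (intro mult_right_mono) auto
      finally obtain j where "j \<in> {-J..J}" "of_int j * \<delta> \<le> W \<omega> \<bullet> \<theta>" "W \<omega> \<bullet> \<theta> < (of_int j + 1) * \<delta>"
          "Y \<omega> \<in> {of_int j * \<delta> - \<delta> .. of_int j * \<delta> + 2 * \<delta>}"
        using strip_containing[OF \<delta> _, of "W \<omega> \<bullet> \<theta>" _ "Y \<omega>"] \<omega> unfolding J_def by auto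
      then show ?thesis using \<omega> by (auto simp: E_def strip_def)
    qed (use \<omega> in auto)
  qed
  have "disjoint_family F"
    unfolding disjoint_family_on_def
  proof (intro ballI impI)
    fix i j :: int assume "i \<noteq> j"
    have False if "\<omega> \<in> F i" "\<omega> \<in> F j" for \<omega>
    proof -
      have "of_int i * \<delta> < (of_int j + 1) * \<delta>" "of_int j * \<delta> < (of_int i + 1) * \<delta>"
        using that by (auto simp: F_def strip_def)
      then have "of_int i < of_int j + (1::real)" "of_int j < of_int i + (1::real)"
        using \<delta> by (simp_all add: mult_less_cancel_right)
      then show False using \<open>i \<noteq> j\<close> by linarith
    qed
    then show "F i \<inter> F j = {}" by blast
  qed
  have null: "prob {\<omega>\<in>space M. \<not> norm (W \<omega>) < m} = 0"
    using bndW far_events by (subst prob_Collect_eq_0) auto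
  have "prob {\<omega>\<in>space M. \<bar>Y \<omega> - W \<omega> \<bullet> \<theta>\<bar> \<le> \<delta>}
      \<le> prob ((\<Union>j\<in>{-J..J}. E j) \<union> {\<omega>\<in>space M. \<not> norm (W \<omega>) < m})"
    using cover E_events far_events by (intro finite_measure_mono sets.Un sets.finite_UN) auto
  also have "\<dots> \<le> prob (\<Union>j\<in>{-J..J}. E j) + prob {\<omega>\<in>space M. \<not> norm (W \<omega>) < m}"
    using E_events far_events by (intro measure_Un_le sets.finite_UN) auto
  also have "\<dots> \<le> (\<Sum>j\<in>{-J..J}. prob (E j))"
    using null E_events by (simp add: finite_measure_subadditive_finite image_subset_iff)
  also have "\<dots> \<le> (\<Sum>j\<in>{-J..J}. fb * (3 * \<delta>) * prob (F j))"
  proof (rule sum_mono)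
    fix j
    have ab: "of_int j * \<delta> - \<delta> \<le> of_int j * \<delta> + 2 * \<delta>" using \<delta> by simp
    have "prob (E j) \<le> fb * ((of_int j * \<delta> + 2 * \<delta>) - (of_int j * \<delta> - \<delta>)) * prob (F j)"
      unfolding E_def F_def by (rule prob_slab_le_density_bound[OF meas f_dens f_bnd fb strip_borel ab])
    then show "prob (E j) \<le> fb * (3 * \<delta>) * prob (F j)" by (simp add: algebra_simps)
  qed
  also have "\<dots> = fb * (3 * \<delta>) * prob (\<Union>j\<in>{-J..J}. F j)"
    using disjoint_family_on_mono[OF subset_UNIV \<open>disjoint_family F\<close>] F_events
    by (simp add: finite_measure_finite_Union image_subset_iff sum_distrib_left)
  also have "\<dots> \<le> fb * (3 * \<delta>)"
    using fb \<delta> by (intro mult_left_le) auto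
  finally show ?thesis by simp
qed

end

section \<open>I.i.d. samples\<close>

lemma exp_neg_linear_tendsto_zero:
  assumes "c > 0"
  shows "(\<lambda>n. exp (- c * real n)) \<longlonglongrightarrow> 0"
proof -
  have "filterlim (\<lambda>n. c * real n) at_top sequentially"
    using assms by (intro filterlim_tendsto_pos_mult_at_top[OF tendsto_const] filterlim_real_sequentially)
  then have "filterlim (\<lambda>n. - c * real n) at_bot sequentially"
    by (simp add: filterlim_uminus_at_bot)
  then show ?thesis by (rule filterlim_compose[OF exp_at_bot])
qed

locale iid_sample = prob_space M for M :: "'a measure" +
  fixes Y :: "nat \<Rightarrow> 'a \<Rightarrow> real" and W Z :: "nat \<Rightarrow> 'a \<Rightarrow> real^'k"
  assumes indep: "indep_vars (\<lambda>_. borel) (\<lambda>i \<omega>. (Y i \<omega>, W i \<omega>, Z i \<omega>)) UNIV"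
    and ident: "\<And>i. distr M borel (\<lambda>\<omega>. (Y i \<omega>, W i \<omega>, Z i \<omega>)) = distr M borel (\<lambda>\<omega>. (Y 0 \<omega>, W 0 \<omega>, Z 0 \<omega>))"
begin

definition obs :: "nat \<Rightarrow> 'a \<Rightarrow> real \<times> (real^'k) \<times> (real^'k)" where
  "obs i \<omega> = (Y i \<omega>, W i \<omega>, Z i \<omega>)"

lemma measurable_obs[measurable]: "obs i \<in> borel_measurable M"
  using indep unfolding indep_vars_def obs_def by auto

lemma measurable_sample[measurable]:
  "Y i \<in> borel_measurable M" "W i \<in> borel_measurable M" "Z i \<in> borel_measurable M"
proof -
  have obs: "obs i \<in> M \<rightarrow>\<^sub>M borel \<Otimes>\<^sub>M (borel \<Otimes>\<^sub>M borel)"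
    using measurable_obs[of i] by (simp only: borel_prod)
  have "Y i = (\<lambda>\<omega>. fst (obs i \<omega>))" "W i = (\<lambda>\<omega>. fst (snd (obs i \<omega>)))" "Z i = (\<lambda>\<omega>. snd (snd (obs i \<omega>)))"
    by (auto simp: obs_def)
  with obs show "Y i \<in> borel_measurable M" "W i \<in> borel_measurable M" "Z i \<in> borel_measurable M"
    by simp_all
qed

lemma distr_obs: "distr M borel (obs i) = distr M borel (obs 0)"
  using ident unfolding obs_def by simp

lemma prob_obs_eq:
  assumes "S \<in> sets borel"
  shows "prob {\<omega>\<in>space M. obs i \<omega> \<in> S} = prob {\<omega>\<in>space M. obs 0 \<omega> \<in> S}"
proof -
  have "prob {\<omega>\<in>space M. obs j \<omega> \<in> S} = measure (distr M borel (obs j)) S" for j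
    using assms by (subst measure_distr) (auto intro!: arg_cong[where f="measure M"])
  then show ?thesis by (simp only: distr_obs[of i])
qed

lemma AE_obs:
  assumes [measurable]: "Measurable.pred borel P" and "AE \<omega> in M. P (obs 0 \<omega>)"
  shows "AE \<omega> in M. P (obs i \<omega>)"
proof -
  have "AE x in distr M borel (obs 0). P x" using assms(2) by (subst AE_distr_iff) auto
  then have "AE x in distr M borel (obs i). P x" by (simp only: distr_obs[of i])
  then show ?thesis by (subst (asm) AE_distr_iff) auto
qed

lemma prob_average_deviation_le:
  fixes h :: "real \<times> (real^'k) \<times> (real^'k) \<Rightarrow> real"
  assumes [measurable]: "h \<in> borel_measurable borel"
    and bnd: "AE \<omega> in M. h (obs 0 \<omega>) \<in> {a..b}" and "a < b" "\<eta> \<ge> 0" "n > 0"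
  shows "prob {\<omega>\<in>space M. \<eta> \<le> \<bar>(\<Sum>i<n. h (obs i \<omega>)) / n - expectation (\<lambda>\<omega>. h (obs 0 \<omega>))\<bar>}
     \<le> 2 * exp (-2 * n * \<eta>\<^sup>2 / (b - a)\<^sup>2)"
proof -
  interpret H: Hoeffding_ineq_iid M "{..<n}" "\<lambda>i \<omega>. h (obs i \<omega>)" "\<lambda>\<omega>. h (obs 0 \<omega>)" a b
    "expectation (\<lambda>\<omega>. h (obs 0 \<omega>))"
  proof unfold_locales
    have "indep_vars (\<lambda>_. borel) (\<lambda>i \<omega>. h (obs i \<omega>)) UNIV"
      using indep unfolding obs_def by (intro indep_vars_compose2[where Y="\<lambda>_. h"]) auto
    then show "indep_vars (\<lambda>_. borel) (\<lambda>i \<omega>. h (obs i \<omega>)) {..<n}"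
      by (rule indep_vars_subset) auto
    fix i
    have "distr M borel (\<lambda>\<omega>. h (obs j \<omega>)) = distr (distr M borel (obs j)) borel h" for j
      by (subst distr_distr) (auto simp: comp_def)
    then show "distr M borel (\<lambda>\<omega>. h (obs i \<omega>)) = distr M borel (\<lambda>\<omega>. h (obs 0 \<omega>))"
      by (simp only: distr_obs[of i])
  qed (use bnd in simp_all)
  have "{..<n} \<noteq> {}" using \<open>n > 0\<close> by auto
  from H.Hoeffding_ineq_abs_ge'[OF \<open>\<eta> \<ge> 0\<close> \<open>a < b\<close> this] show ?thesis by simp
qed

lemma average_near_expectation_wpa1:
  fixes h :: "real \<times> (real^'k) \<times> (real^'k) \<Rightarrow> real"
  assumes [measurable]: "h \<in> borel_measurable borel"
    and bnd: "AE \<omega> in M. h (obs 0 \<omega>) \<in> {a..b}" and ab: "a < b" and \<eta>: "\<eta> > 0"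
  shows "holds_wpa1 M (\<lambda>n \<omega>. \<bar>(\<Sum>i<n. h (obs i \<omega>)) / n - expectation (\<lambda>\<omega>. h (obs 0 \<omega>))\<bar> < \<eta>)"
proof (rule holds_wpa1I)
  define c where "c = 2 * \<eta>\<^sup>2 / (b - a)\<^sup>2"
  have "c > 0" unfolding c_def using ab \<eta> by (intro divide_pos_pos) auto
  then show "(\<lambda>n. 2 * exp (- c * real n)) \<longlonglongrightarrow> 0"
    by (intro tendsto_mult_right_zero exp_neg_linear_tendsto_zero)
  show "\<forall>\<^sub>F n in sequentially. \<exists>B\<in>events. prob B \<le> 2 * exp (- c * real n) \<and>
      (\<forall>\<omega>\<in>space M - B. \<bar>(\<Sum>i<n. h (obs i \<omega>)) / n - expectation (\<lambda>\<omega>. h (obs 0 \<omega>))\<bar> < \<eta>)"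
    using eventually_gt_at_top[of 0]
  proof eventually_elim
    case (elim n)
    have "prob {\<omega>\<in>space M. \<eta> \<le> \<bar>(\<Sum>i<n. h (obs i \<omega>)) / n - expectation (\<lambda>\<omega>. h (obs 0 \<omega>))\<bar>}
        \<le> 2 * exp (- c * real n)"
    proof -
      have "-2 * real n * \<eta>\<^sup>2 / (b - a)\<^sup>2 = - c * real n" by (simp add: c_def)
      then show ?thesis
        using prob_average_deviation_le[OF assms(1) bnd ab less_imp_le[OF \<eta>] elim] by (simp only:)
    qed
    moreover have "{\<omega>\<in>space M. \<eta> \<le> \<bar>(\<Sum>i<n. h (obs i \<omega>)) / n - expectation (\<lambda>\<omega>. h (obs 0 \<omega>))\<bar>} \<in> events"
      by measurable
    ultimately show ?case by (intro bexI) (auto simp: not_le)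
  qed
qed

lemma prob_all_hit_le:
  assumes [measurable]: "S \<in> sets borel" and q: "prob {\<omega>\<in>space M. obs 0 \<omega> \<in> S} \<le> q"
    and B: "finite B" "B \<noteq> {}"
  shows "prob (\<Inter>i\<in>B. obs i -` S \<inter> space M) \<le> q ^ card B"
proof -
  have "prob (\<Inter>i\<in>B. obs i -` S \<inter> space M) = (\<Prod>i\<in>B. prob (obs i -` S \<inter> space M))"
    using B indep unfolding obs_def by (intro indep_varsD[where M'="\<lambda>_. borel"]) auto
  also have "\<dots> \<le> (\<Prod>i\<in>B. q)"
  proof (rule prod_mono)
    fix i
    have "prob (obs i -` S \<inter> space M) = prob {\<omega>\<in>space M. obs 0 \<omega> \<in> S}"
      using prob_obs_eq[of S i] by (simp add: vimage_def Int_def conj_commute)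
    then show "0 \<le> prob (obs i -` S \<inter> space M) \<and> prob (obs i -` S \<inter> space M) \<le> q"
      using q by simp
  qed
  finally show ?thesis by simp
qed

lemma prob_many_hits_le:
  assumes [measurable]: "S \<in> sets borel" and q: "prob {\<omega>\<in>space M. obs 0 \<omega> \<in> S} \<le> q" and "K > 0"
  shows "\<exists>U\<in>events. {\<omega>\<in>space M. K \<le> card {i\<in>{..<n}. obs i \<omega> \<in> S}} \<subseteq> U \<and> prob U \<le> real n ^ K * q ^ K"
proof -
  \<comment> \<open>K hits among n draws means that all draws of some K-subset hit S; union bound over the subsets.\<close>
  define F where "F = {B. B \<subseteq> {..<n} \<and> card B = K}"
  define A where "A B = (\<Inter>i\<in>B. obs i -` S \<inter> space M)" for B
  have F: "finite B" "B \<noteq> {}" if "B \<in> F" for B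
    using that \<open>K > 0\<close> by (auto simp: F_def finite_subset)
  have A_events: "A B \<in> events" if "B \<in> F" for B
    using F[OF that] unfolding A_def by (intro sets.finite_INT) auto
  have "{\<omega>\<in>space M. K \<le> card {i\<in>{..<n}. obs i \<omega> \<in> S}} \<subseteq> (\<Union>B\<in>F. A B)"
  proof
    fix \<omega> assume "\<omega> \<in> {\<omega>\<in>space M. K \<le> card {i\<in>{..<n}. obs i \<omega> \<in> S}}"
    moreover from this obtain B where B: "B \<subseteq> {i\<in>{..<n}. obs i \<omega> \<in> S}" "card B = K"
      by (auto elim: obtain_subset_with_card_n)
    ultimately have "B \<in> F" "\<omega> \<in> A B" unfolding F_def A_def by blast+
    then show "\<omega> \<in> (\<Union>B\<in>F. A B)" by blast
  qed
  moreover have "(\<Union>B\<in>F. A B) \<in> events" using A_events by (auto simp: F_def)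
  moreover have "prob (\<Union>B\<in>F. A B) \<le> real n ^ K * q ^ K"
  proof -
    have "prob (A B) \<le> q ^ K" if "B \<in> F" for B
      using prob_all_hit_le[OF assms(1) q F[OF that]] that by (simp add: A_def F_def)
    then have "(\<Sum>B\<in>F. prob (A B)) \<le> (\<Sum>B\<in>F. q ^ K)" by (rule sum_mono)
    moreover have "prob (\<Union>B\<in>F. A B) \<le> (\<Sum>B\<in>F. prob (A B))"
      using A_events by (intro finite_measure_subadditive_finite) (auto simp: F_def)
    ultimately have "prob (\<Union>B\<in>F. A B) \<le> (\<Sum>B\<in>F. q ^ K)" by linarith
    also have "\<dots> = real (card F) * q ^ K" by simp
    also have "\<dots> \<le> real n ^ K * q ^ K"
    proof (rule mult_right_mono)
      have "card F = n choose K" by (simp add: F_def n_subsets)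
      moreover have "n choose K \<le> n ^ K"
        by (cases "K \<le> n") (simp_all add: binomial_le_pow binomial_eq_0)
      ultimately show "real (card F) \<le> real n ^ K"
        by (simp only: of_nat_le_iff of_nat_power[symmetric])
      have "0 \<le> q" using q measure_nonneg[of M "{\<omega>\<in>space M. obs 0 \<omega> \<in> S}"] by linarith
      then show "0 \<le> q ^ K" by simp
    qed
    finally show ?thesis .
  qed
  ultimately show ?thesis by blast
qed

end

section \<open>The quantile moment conditions\<close>

lemma (in prob_space) expectation_if_eq_prob:
  assumes "{\<omega>\<in>space M. P \<omega>} \<in> events"
  shows "expectation (\<lambda>\<omega>. if P \<omega> then 1 else 0 :: real) = prob {\<omega>\<in>space M. P \<omega>}"
proof -
  have "expectation (\<lambda>\<omega>. if P \<omega> then 1 else 0 :: real) = expectation (indicator {\<omega>\<in>space M. P \<omega>})"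
    by (rule Bochner_Integration.integral_cong) (auto simp: indicator_def)
  then show ?thesis by (simp add: Int_absorb2)
qed

lemma abs_inner_diff_le:
  fixes w \<theta> \<theta>' :: "'b::real_inner"
  assumes "norm w \<le> m" "norm (\<theta> - \<theta>') \<le> \<delta>"
  shows "\<bar>w \<bullet> \<theta> - w \<bullet> \<theta>'\<bar> \<le> m * \<delta>"
proof -
  have "\<bar>w \<bullet> \<theta> - w \<bullet> \<theta>'\<bar> \<le> norm w * norm (\<theta> - \<theta>')"
    using Cauchy_Schwarz_ineq2[of w "\<theta> - \<theta>'"] by (simp add: inner_diff_right)
  also have "\<dots> \<le> m * \<delta>"
    using assms order_trans[OF norm_ge_zero assms(1)] by (intro mult_mono) auto
  finally show ?thesis .
qed

lemma abs_step_diff_le: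
  fixes w \<theta> \<theta>' :: "'b::real_inner"
  assumes "norm w \<le> m" "norm (\<theta> - \<theta>') \<le> \<delta>"
  shows "\<bar>(if y \<le> w \<bullet> \<theta> then 1 else 0) - (if y \<le> w \<bullet> \<theta>' then 1 else 0) :: real\<bar>
     \<le> (if \<bar>y - w \<bullet> \<theta>'\<bar> \<le> m * \<delta> then 1 else 0)"
  using abs_inner_diff_le[OF assms] by (auto split: if_splits)

definition ramp :: "real \<Rightarrow> real \<Rightarrow> real" where
  "ramp r x = max 0 (min 1 (1 + x / r))"

lemma abs_step_minus_ramp_le:
  assumes r: "r > 0"
  shows "\<bar>(if y \<le> u then 1 else 0) - ramp r (u - y)\<bar> \<le> (if \<bar>y - u\<bar> < r then 1 else 0)"
proof (cases "y \<le> u")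
  case True
  then have "1 + (u - y) / r \<ge> 1" using r by simp
  then show ?thesis using True by (auto simp: ramp_def)
next
  case False
  show ?thesis
  proof (cases "u - y \<le> -r")
    case True
    then have "(u - y) / r \<le> -1" using r by (simp add: divide_le_eq)
    then have "1 + (u - y) / r \<le> 0" by simp
    then show ?thesis using False by (auto simp: ramp_def)
  next
    case False2: False
    then have "\<bar>y - u\<bar> < r" using False by auto
    moreover have "0 \<le> ramp r (u - y)" "ramp r (u - y) \<le> 1" by (auto simp: ramp_def)
    ultimately show ?thesis by auto
  qed
qed

lemma norm_average_le_card:
  fixes z :: "nat \<Rightarrow> 'b::real_normed_vector"
  assumes z: "\<And>i. i < n \<Longrightarrow> norm (z i) \<le> m"
    and c: "\<And>i. i < n \<Longrightarrow> \<bar>c i\<bar> \<le> (if P i then 1 else 0)"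
  shows "norm ((1 / real n) *\<^sub>R (\<Sum>i<n. c i *\<^sub>R z i)) \<le> m / n * card {i\<in>{..<n}. P i}"
proof -
  have "norm (\<Sum>i<n. c i *\<^sub>R z i) \<le> (\<Sum>i<n. (if P i then 1 else 0) * m)"
  proof (rule order_trans[OF norm_sum sum_mono])
    fix i assume "i \<in> {..<n}"
    then have "\<bar>c i\<bar> * norm (z i) \<le> (if P i then 1 else 0) * m"
      using c[of i] z[of i] by (intro mult_mono) auto
    then show "norm (c i *\<^sub>R z i) \<le> (if P i then 1 else 0) * m" by simp
  qed
  also have "\<dots> = m * card {i\<in>{..<n}. P i}"
    using sum.inter_filter[of "{..<n}" "\<lambda>_. 1::real" P] by (simp add: sum_distrib_right[symmetric])
  finally have "(1 / real n) * norm (\<Sum>i<n. c i *\<^sub>R z i) \<le> (1 / real n) * (m * card {i\<in>{..<n}. P i})"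
    by (rule mult_left_mono) simp
  then show ?thesis by simp
qed

lemma borel_measurable_vec_nth[measurable (raw)]:
  fixes f :: "'b \<Rightarrow> real^'k"
  shows "f \<in> borel_measurable N \<Longrightarrow> (\<lambda>x. f x $ l) \<in> borel_measurable N"
  by (rule borel_measurable_continuous_on[where f="\<lambda>x. x $ l"]) (auto intro: continuous_intros)

lemma union_bound_power_eq:
  fixes x c q :: real
  assumes x: "x \<noteq> 0"
  shows "(c * x\<^sup>2) ^ k * (x ^ (2 * k + 1) * (q / x\<^sup>2) ^ (2 * k + 1)) = c ^ k * q ^ (2 * k + 1) / x"
proof -
  have cancel: "C * a * (b * (Q / (a * b * x))) = C * Q / x" if "a \<noteq> 0" "b \<noteq> 0" for C a b Q :: real
    using that x by (simp add: field_simps)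
  have e1: "(c * x\<^sup>2) ^ k = c ^ k * x ^ (2 * k)"
    by (simp only: power_mult_distrib power_mult)
  have e2: "(q / x\<^sup>2) ^ (2 * k + 1) = q ^ (2 * k + 1) / x ^ (2 * (2 * k + 1))"
    by (simp only: power_divide power_mult)
  have e3: "x ^ (2 * (2 * k + 1)) = x ^ (2 * k) * x ^ (2 * k + 1) * x"
    by (simp add: power_add[symmetric])
  have "(c * x\<^sup>2) ^ k * (x ^ (2 * k + 1) * (q / x\<^sup>2) ^ (2 * k + 1))
      = c ^ k * x ^ (2 * k) * (x ^ (2 * k + 1) * (q ^ (2 * k + 1) / (x ^ (2 * k) * x ^ (2 * k + 1) * x)))"
    by (simp only: e1 e2 e3)
  also have "\<dots> = c ^ k * q ^ (2 * k + 1) / x"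
    by (rule cancel) (use x in simp_all)
  finally show ?thesis .
qed

locale qr_moment_model = iid_sample M Y W Z
  for M :: "'a measure" and Y :: "nat \<Rightarrow> 'a \<Rightarrow> real" and W Z :: "nat \<Rightarrow> 'a \<Rightarrow> real^'k" +
  fixes m fb tau :: real
  assumes m_pos: "m > 0" and fb_nonneg: "fb \<ge> 0" and tau: "0 < tau" "tau < 1"
    and bndZ: "AE \<omega> in M. norm (Z 0 \<omega>) < m" and bndW: "AE \<omega> in M. norm (W 0 \<omega>) < m"
    and prob_near_hyperplane:
      "\<And>\<theta> \<delta>. \<delta> > 0 \<Longrightarrow> prob {\<omega>\<in>space M. \<bar>Y 0 \<omega> - W 0 \<omega> \<bullet> \<theta>\<bar> \<le> \<delta>} \<le> 3 * fb * \<delta>"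
begin

abbreviation gp :: "real^'k \<Rightarrow> real^'k" where
  "gp \<equiv> gpop M tau (Y 0) (W 0) (Z 0)"

abbreviation gn :: "nat \<Rightarrow> real^'k \<Rightarrow> 'a \<Rightarrow> real^'k" where
  "gn \<equiv> ghat tau Y W Z"

definition moment :: "real^'k \<Rightarrow> real \<times> (real^'k) \<times> (real^'k) \<Rightarrow> real^'k" where
  "moment \<theta> t = ((if fst t \<le> fst (snd t) \<bullet> \<theta> then 1 else 0) - tau) *\<^sub>R snd (snd t)"

lemma measurable_moment[measurable]: "moment \<theta> \<in> borel_measurable borel"
  unfolding borel_prod[symmetric] moment_def by measurable

lemma ghat_eq_average: "gn n \<theta> \<omega> = (1 / real n) *\<^sub>R (\<Sum>i<n. moment \<theta> (obs i \<omega>))"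
  by (simp add: ghat_def moment_def obs_def)

lemma gpop_eq_expectation: "gp \<theta> = expectation (\<lambda>\<omega>. moment \<theta> (obs 0 \<omega>))"
  by (simp add: gpop_def moment_def obs_def)

lemma norm_moment_le: "AE \<omega> in M. norm (moment \<theta> (obs 0 \<omega>)) \<le> m"
  using bndZ
proof eventually_elim
  case (elim \<omega>)
  have "norm (moment \<theta> (obs 0 \<omega>)) = \<bar>(if Y 0 \<omega> \<le> W 0 \<omega> \<bullet> \<theta> then 1 else 0) - tau\<bar> * norm (Z 0 \<omega>)"
    by (simp add: moment_def obs_def)
  also have "\<dots> \<le> 1 * m" using elim tau by (intro mult_mono) auto
  finally show ?case by simp
qed

lemma integrable_moment: "integrable M (\<lambda>\<omega>. moment \<theta> (obs 0 \<omega>))"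
  by (rule integrable_const_bound[OF norm_moment_le]) simp

lemma gpop_nth: "gp \<theta> $ l = expectation (\<lambda>\<omega>. moment \<theta> (obs 0 \<omega>) $ l)"
  unfolding gpop_eq_expectation
  using integral_bounded_linear[OF bounded_linear_vec_nth integrable_moment] by simp

lemma ghat_nth: "gn n \<theta> \<omega> $ l = (\<Sum>i<n. moment \<theta> (obs i \<omega>) $ l) / n"
  by (simp add: ghat_eq_average sum_divide_distrib)

definition bounded_sample :: "'a \<Rightarrow> bool" where
  "bounded_sample \<omega> \<longleftrightarrow> (\<forall>i. norm (W i \<omega>) < m \<and> norm (Z i \<omega>) < m)"

lemma AE_bounded_sample: "AE \<omega> in M. bounded_sample \<omega>"
  unfolding bounded_sample_def
proof (subst AE_all_countable, intro allI)
  fix i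
  have [measurable]: "Measurable.pred borel
      (\<lambda>t::real \<times> (real^'k) \<times> (real^'k). norm (fst (snd t)) < m \<and> norm (snd (snd t)) < m)"
    unfolding borel_prod[symmetric] by measurable
  have "AE \<omega> in M. norm (fst (snd (obs 0 \<omega>))) < m \<and> norm (snd (snd (obs 0 \<omega>))) < m"
    using bndW bndZ by eventually_elim (simp add: obs_def)
  from AE_obs[OF _ this, of i] show "AE \<omega> in M. norm (W i \<omega>) < m \<and> norm (Z i \<omega>) < m"
    by (simp add: obs_def)
qed

lemma bounded_sampleD:
  assumes "bounded_sample \<omega>"
  shows "norm (W i \<omega>) \<le> m" "norm (Z i \<omega>) \<le> m"
  using assms by (auto simp: bounded_sample_def less_imp_le)

lemma gpop_diff_le:
  assumes "norm (\<theta> - \<theta>') \<le> \<delta>" "\<delta> > 0"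
  shows "norm (gp \<theta> - gp \<theta>') \<le> 3 * fb * m\<^sup>2 * \<delta>"
proof -
  define near where "near = {\<omega>\<in>space M. \<bar>Y 0 \<omega> - W 0 \<omega> \<bullet> \<theta>'\<bar> \<le> m * \<delta>}"
  have [measurable]: "near \<in> events" unfolding near_def by measurable
  have "norm (gp \<theta> - gp \<theta>') = norm (expectation (\<lambda>\<omega>. moment \<theta> (obs 0 \<omega>) - moment \<theta>' (obs 0 \<omega>)))"
    by (simp add: gpop_eq_expectation integrable_moment)
  also have "\<dots> \<le> expectation (\<lambda>\<omega>. norm (moment \<theta> (obs 0 \<omega>) - moment \<theta>' (obs 0 \<omega>)))"
    by (rule integral_norm_bound)
  also have "\<dots> \<le> expectation (\<lambda>\<omega>. m * indicator near \<omega>)"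
  proof (rule integral_mono_AE')
    show "integrable M (\<lambda>\<omega>. m * indicator near \<omega>)"
      by (intro integrable_mult_right) (simp add: integrable_indicator_iff emeasure_eq_measure)
    show "AE \<omega> in M. 0 \<le> m * indicator near \<omega>" using m_pos by simp
    show "AE \<omega> in M. norm (moment \<theta> (obs 0 \<omega>) - moment \<theta>' (obs 0 \<omega>)) \<le> m * indicator near \<omega>"
      using AE_space bndW bndZ
    proof eventually_elim
      case (elim \<omega>)
      have "norm (moment \<theta> (obs 0 \<omega>) - moment \<theta>' (obs 0 \<omega>)) = \<bar>(if Y 0 \<omega> \<le> W 0 \<omega> \<bullet> \<theta> then 1 else 0)
          - (if Y 0 \<omega> \<le> W 0 \<omega> \<bullet> \<theta>' then 1 else 0) :: real\<bar> * norm (Z 0 \<omega>)"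
        by (simp add: moment_def obs_def scaleR_diff_left[symmetric])
      also have "\<dots> \<le> (if \<bar>Y 0 \<omega> - W 0 \<omega> \<bullet> \<theta>'\<bar> \<le> m * \<delta> then 1 else 0) * m"
        using elim assms abs_step_diff_le[of "W 0 \<omega>" m \<theta> \<theta>' \<delta> "Y 0 \<omega>"] by (intro mult_mono) auto
      also have "\<dots> = m * indicator near \<omega>"
        using elim by (simp add: near_def)
      finally show ?case .
    qed
  qed
  also have "\<dots> = m * prob near" by (simp add: near_def)
  also have "\<dots> \<le> m * (3 * fb * (m * \<delta>))"
    using prob_near_hyperplane[of "m * \<delta>" \<theta>'] m_pos assms unfolding near_def by (intro mult_left_mono) auto
  finally show ?thesis by (simp add: power2_eq_square mult_ac)
qed

lemma ghat_diff_le: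
  assumes "bounded_sample \<omega>" "norm (\<theta> - \<theta>') \<le> \<delta>"
  shows "norm (gn n \<theta> \<omega> - gn n \<theta>' \<omega>) \<le> m / n * card {i\<in>{..<n}. \<bar>Y i \<omega> - W i \<omega> \<bullet> \<theta>'\<bar> \<le> m * \<delta>}"
proof -
  have eq: "gn n \<theta> \<omega> - gn n \<theta>' \<omega> = (1 / real n) *\<^sub>R (\<Sum>i<n.
      ((if Y i \<omega> \<le> W i \<omega> \<bullet> \<theta> then 1 else 0) - (if Y i \<omega> \<le> W i \<omega> \<bullet> \<theta>' then 1 else 0)) *\<^sub>R Z i \<omega>)"
    unfolding ghat_def
    by (simp add: scaleR_diff_right[symmetric] sum_subtractf[symmetric] scaleR_diff_left[symmetric])
  show ?thesis
    unfolding eq by (intro norm_average_le_card abs_step_diff_le bounded_sampleD[OF assms(1)] assms(2))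
qed

definition gn_smooth :: "nat \<Rightarrow> 'a \<Rightarrow> real^'k \<Rightarrow> real^'k" where
  "gn_smooth n \<omega> \<theta> = (1 / real n) *\<^sub>R (\<Sum>i<n. (ramp (1 / (real n)\<^sup>2) (W i \<omega> \<bullet> \<theta> - Y i \<omega>) - tau) *\<^sub>R Z i \<omega>)"

lemma continuous_on_gn_smooth: "continuous_on S (gn_smooth n \<omega>)"
  unfolding gn_smooth_def ramp_def divide_inverse by (intro continuous_intros)

lemma ghat_minus_gn_smooth_le:
  assumes "bounded_sample \<omega>"
  shows "norm (gn n \<theta> \<omega> - gn_smooth n \<omega> \<theta>) \<le> m / n * card {i\<in>{..<n}. \<bar>Y i \<omega> - W i \<omega> \<bullet> \<theta>\<bar> < 1 / (real n)\<^sup>2}"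
proof -
  have eq: "gn n \<theta> \<omega> - gn_smooth n \<omega> \<theta> = (1 / real n) *\<^sub>R (\<Sum>i<n.
      ((if Y i \<omega> \<le> W i \<omega> \<bullet> \<theta> then 1 else 0) - ramp (1 / (real n)\<^sup>2) (W i \<omega> \<bullet> \<theta> - Y i \<omega>)) *\<^sub>R Z i \<omega>)"
    unfolding ghat_def gn_smooth_def
    by (simp add: scaleR_diff_right[symmetric] sum_subtractf[symmetric] scaleR_diff_left[symmetric])
  show ?thesis
    unfolding eq by (intro norm_average_le_card abs_step_minus_ramp_le bounded_sampleD[OF assms]) auto
qed

lemma gn_near_gp_via_net_point:
  assumes bnd: "bounded_sample \<omega>" and \<theta>: "norm (\<theta> - \<theta>') \<le> \<delta>" and \<delta>: "\<delta> > 0"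
    and comp: "\<And>l. \<bar>gn n \<theta>' \<omega> $ l - gp \<theta>' $ l\<bar> \<le> \<eta>"
    and count: "card {i\<in>{..<n}. \<bar>Y i \<omega> - W i \<omega> \<bullet> \<theta>'\<bar> \<le> m * \<delta>} / n \<le> 3 * fb * (m * \<delta>) + \<eta>"
  shows "norm (gn n \<theta> \<omega> - gp \<theta>) \<le> 6 * fb * m\<^sup>2 * \<delta> + (m + CARD('k)) * \<eta>"
proof -
  have "norm (gn n \<theta> \<omega> - gn n \<theta>' \<omega>) \<le> m * (card {i\<in>{..<n}. \<bar>Y i \<omega> - W i \<omega> \<bullet> \<theta>'\<bar> \<le> m * \<delta>} / n)"
    using ghat_diff_le[OF bnd \<theta>] by simp
  also have "\<dots> \<le> m * (3 * fb * (m * \<delta>) + \<eta>)"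
    using count m_pos by (intro mult_left_mono) auto
  finally have sample_shift: "norm (gn n \<theta> \<omega> - gn n \<theta>' \<omega>) \<le> m * (3 * fb * (m * \<delta>) + \<eta>)" .
  have "norm (gn n \<theta>' \<omega> - gp \<theta>') \<le> (\<Sum>l\<in>UNIV. \<bar>(gn n \<theta>' \<omega> - gp \<theta>') $ l\<bar>)"
    by (rule norm_le_l1_cart)
  also have "\<dots> \<le> (\<Sum>l\<in>(UNIV::'k set). \<eta>)"
    using comp by (intro sum_mono) simp
  finally have at_net_point: "norm (gn n \<theta>' \<omega> - gp \<theta>') \<le> CARD('k) * \<eta>" by simp
  have pop_shift: "norm (gp \<theta>' - gp \<theta>) \<le> 3 * fb * m\<^sup>2 * \<delta>"
    using gpop_diff_le[of \<theta>' \<theta> \<delta>] \<theta> \<delta> by (simp add: norm_minus_commute)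
  have "norm (gn n \<theta> \<omega> - gp \<theta>) \<le> m * (3 * fb * (m * \<delta>) + \<eta>) + CARD('k) * \<eta> + 3 * fb * m\<^sup>2 * \<delta>"
    using norm_diff_triangle_le[OF norm_diff_triangle_le[OF sample_shift at_net_point] pop_shift] .
  then show ?thesis by (simp add: algebra_simps power2_eq_square)
qed

lemma ghat_nth_wpa1:
  assumes \<eta>: "\<eta> > 0"
  shows "holds_wpa1 M (\<lambda>n \<omega>. \<bar>gn n \<theta> \<omega> $ l - gp \<theta> $ l\<bar> < \<eta>)"
proof -
  have meas: "(\<lambda>t. moment \<theta> t $ l) \<in> borel_measurable borel" by measurable
  have bnd: "AE \<omega> in M. moment \<theta> (obs 0 \<omega>) $ l \<in> {-m..m}"
    using norm_moment_le[of \<theta>]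
  proof eventually_elim
    case (elim \<omega>)
    then have "\<bar>moment \<theta> (obs 0 \<omega>) $ l\<bar> \<le> m"
      using component_le_norm_cart[of "moment \<theta> (obs 0 \<omega>)" l] by linarith
    then show ?case by (simp add: abs_le_iff)
  qed
  have "-m < m" using m_pos by simp
  then show ?thesis
    unfolding ghat_nth gpop_nth by (rule average_near_expectation_wpa1[OF meas bnd _ \<eta>])
qed

lemma frac_near_hyperplane_wpa1:
  assumes \<delta>: "\<delta> > 0" and \<eta>: "\<eta> > 0"
  shows "holds_wpa1 M (\<lambda>n \<omega>. card {i\<in>{..<n}. \<bar>Y i \<omega> - W i \<omega> \<bullet> \<theta>\<bar> \<le> \<delta>} / n < 3 * fb * \<delta> + \<eta>)"
proof -
  define h where "h t = (if \<bar>fst t - fst (snd t) \<bullet> \<theta>\<bar> \<le> \<delta> then 1 else 0 :: real)"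
    for t :: "real \<times> (real^'k) \<times> (real^'k)"
  have h_meas: "h \<in> borel_measurable borel"
    unfolding h_def borel_prod[symmetric] by measurable
  have "expectation (\<lambda>\<omega>. h (obs 0 \<omega>)) = prob {\<omega>\<in>space M. \<bar>Y 0 \<omega> - W 0 \<omega> \<bullet> \<theta>\<bar> \<le> \<delta>}"
    unfolding h_def obs_def by (subst expectation_if_eq_prob) auto
  also have "\<dots> \<le> 3 * fb * \<delta>" using prob_near_hyperplane \<delta> by simp
  finally have Eh: "expectation (\<lambda>\<omega>. h (obs 0 \<omega>)) \<le> 3 * fb * \<delta>" .
  have avg: "(\<Sum>i<n. h (obs i \<omega>)) = card {i\<in>{..<n}. \<bar>Y i \<omega> - W i \<omega> \<bullet> \<theta>\<bar> \<le> \<delta>}" for n \<omega>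
    using sum.inter_filter[of "{..<n}" "\<lambda>_. 1::real" "\<lambda>i. \<bar>Y i \<omega> - W i \<omega> \<bullet> \<theta>\<bar> \<le> \<delta>"]
    by (simp add: h_def obs_def)
  have "AE \<omega> in M. h (obs 0 \<omega>) \<in> {0..1}" by (simp add: h_def)
  then have "holds_wpa1 M (\<lambda>n \<omega>. \<bar>(\<Sum>i<n. h (obs i \<omega>)) / n - expectation (\<lambda>\<omega>. h (obs 0 \<omega>))\<bar> < \<eta>)"
    by (rule average_near_expectation_wpa1[OF h_meas _ _ \<eta>]) simp
  then show ?thesis
    by (rule holds_wpa1_mono) (use Eh in \<open>auto simp: avg abs_less_iff intro!: always_eventually\<close>)
qed

lemma ghat_uniform_wpa1:
  assumes \<rho>: "\<rho> > 0" and \<eta>: "\<eta> > 0"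
  shows "holds_wpa1 M (\<lambda>n \<omega>. \<forall>\<theta>\<in>cball \<theta>0 \<rho>. norm (gn n \<theta> \<omega> - gp \<theta>) \<le> \<eta>)"
proof -
  define P where "P = (fb + 1) * m\<^sup>2"
  have P: "P > 0" unfolding P_def using m_pos fb_nonneg by (intro mult_pos_pos) auto
  define \<delta> where "\<delta> = \<eta> / (12 * P)"
  define \<eta>' where "\<eta>' = \<eta> / (2 * (m + CARD('k)))"
  have mk: "m + CARD('k) > 0" using m_pos by (simp add: add_pos_nonneg)
  have \<delta>: "\<delta> > 0" and \<eta>': "\<eta>' > 0"
    using \<eta> mk P by (simp_all add: \<delta>_def \<eta>'_def)
  have budget: "6 * fb * m\<^sup>2 * \<delta> + (m + CARD('k)) * \<eta>' \<le> \<eta>"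
  proof -
    have "6 * fb * m\<^sup>2 * \<delta> \<le> 6 * P * \<delta>"
      using \<delta> by (simp add: P_def algebra_simps)
    also have "\<dots> = \<eta> / 2"
      using P by (simp add: \<delta>_def field_simps)
    finally have "6 * fb * m\<^sup>2 * \<delta> \<le> \<eta> / 2" .
    moreover have "(m + CARD('k)) * \<eta>' = \<eta> / 2"
      using mk by (simp add: \<eta>'_def field_simps)
    ultimately show ?thesis by linarith
  qed
  obtain N where N: "finite N" "real (card N) \<le> (2 * \<rho> * CARD('k) / \<delta> + 3) ^ CARD('k)"
    "\<And>\<theta>. \<theta> \<in> cball \<theta>0 \<rho> \<Longrightarrow> \<exists>\<theta>'\<in>N. norm (\<theta> - \<theta>') \<le> \<delta>"
    using cball_finite_net[OF \<delta> \<rho>, where c = \<theta>0] by blast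
  have count: "holds_wpa1 M (\<lambda>n \<omega>.
      card {i\<in>{..<n}. \<bar>Y i \<omega> - W i \<omega> \<bullet> \<theta>'\<bar> \<le> m * \<delta>} / n < 3 * fb * (m * \<delta>) + \<eta>')" for \<theta>'
    using m_pos \<delta> \<eta>' by (intro frac_near_hyperplane_wpa1) auto
  define good_at_net where "good_at_net n \<omega> \<longleftrightarrow> (\<forall>\<theta>'\<in>N. (\<forall>l\<in>UNIV. \<bar>gn n \<theta>' \<omega> $ l - gp \<theta>' $ l\<bar> < \<eta>') \<and>
    card {i\<in>{..<n}. \<bar>Y i \<omega> - W i \<omega> \<bullet> \<theta>'\<bar> \<le> m * \<delta>} / n < 3 * fb * (m * \<delta>) + \<eta>')" for n \<omega>
  have "holds_wpa1 M (\<lambda>n \<omega>. \<forall>l\<in>UNIV. \<bar>gn n \<theta>' \<omega> $ l - gp \<theta>' $ l\<bar> < \<eta>')" for \<theta>'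
    using \<eta>' by (intro holds_wpa1_finite_Ball ghat_nth_wpa1) auto
  then have "holds_wpa1 M good_at_net"
    unfolding good_at_net_def by (intro holds_wpa1_finite_Ball[OF N(1)] holds_wpa1_conj count)
  then have "holds_wpa1 M (\<lambda>n \<omega>. bounded_sample \<omega> \<and> good_at_net n \<omega>)"
    by (rule holds_wpa1_conj[OF holds_wpa1_AE[OF AE_bounded_sample]])
  then show ?thesis
  proof (rule holds_wpa1_mono, intro always_eventually ballI impI allI)
    fix n \<omega> \<theta> assume good: "bounded_sample \<omega> \<and> good_at_net n \<omega>" and "\<theta> \<in> cball \<theta>0 \<rho>"
    then obtain \<theta>' where "\<theta>' \<in> N" "norm (\<theta> - \<theta>') \<le> \<delta>" using N(3) by blast
    from good \<open>\<theta>' \<in> N\<close> have bnd: "bounded_sample \<omega>"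
      and comp': "\<And>l. \<bar>gn n \<theta>' \<omega> $ l - gp \<theta>' $ l\<bar> \<le> \<eta>'"
      and count': "card {i\<in>{..<n}. \<bar>Y i \<omega> - W i \<omega> \<bullet> \<theta>'\<bar> \<le> m * \<delta>} / n \<le> 3 * fb * (m * \<delta>) + \<eta>'"
      by (auto simp: good_at_net_def less_imp_le)
    have "norm (gn n \<theta> \<omega> - gp \<theta>) \<le> 6 * fb * m\<^sup>2 * \<delta> + (m + CARD('k)) * \<eta>'"
      by (rule gn_near_gp_via_net_point[OF bnd \<open>norm (\<theta> - \<theta>') \<le> \<delta>\<close> \<delta> comp' count'])
    then show "norm (gn n \<theta> \<omega> - gp \<theta>) \<le> \<eta>" using budget by linarith
  qed
qed

lemma near_subset_near_net_point:
  assumes "bounded_sample \<omega>" "norm (\<theta> - g) \<le> r / m"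
  shows "{i\<in>{..<n}. \<bar>Y i \<omega> - W i \<omega> \<bullet> \<theta>\<bar> < r} \<subseteq> {i\<in>{..<n}. \<bar>Y i \<omega> - W i \<omega> \<bullet> g\<bar> \<le> 2 * r}"
proof safe
  fix i assume "i < n" "\<bar>Y i \<omega> - W i \<omega> \<bullet> \<theta>\<bar> < r"
  moreover have "\<bar>W i \<omega> \<bullet> \<theta> - W i \<omega> \<bullet> g\<bar> \<le> m * (r / m)"
    using bounded_sampleD(1)[OF assms(1)] assms(2) by (rule abs_inner_diff_le)
  then have "\<bar>W i \<omega> \<bullet> \<theta> - W i \<omega> \<bullet> g\<bar> \<le> r" using m_pos by simp
  ultimately show "\<bar>Y i \<omega> - W i \<omega> \<bullet> g\<bar> \<le> 2 * r" by linarith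
qed

lemma prob_many_near_hyperplane_le:
  assumes "\<delta> > 0" "K > 0"
  shows "\<exists>U\<in>events. {\<omega>\<in>space M. K \<le> card {i\<in>{..<n}. \<bar>Y i \<omega> - W i \<omega> \<bullet> \<theta>\<bar> \<le> \<delta>}} \<subseteq> U \<and>
    prob U \<le> real n ^ K * (3 * fb * \<delta>) ^ K"
proof -
  define S where "S = {t :: real \<times> (real^'k) \<times> (real^'k). \<bar>fst t - fst (snd t) \<bullet> \<theta>\<bar> \<le> \<delta>}"
  have S: "S \<in> sets borel"
    unfolding S_def by (intro borel_closed closed_Collect_le continuous_intros)
  have "prob {\<omega>\<in>space M. obs 0 \<omega> \<in> S} \<le> 3 * fb * \<delta>"
    using prob_near_hyperplane[OF assms(1), of \<theta>] by (simp add: S_def obs_def)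
  from prob_many_hits_le[OF S this assms(2), of n] show ?thesis by (simp add: S_def obs_def)
qed

lemma few_near_hyperplane_at:
  fixes \<rho> :: real
  assumes \<rho>: "\<rho> > 0" and n: "n > 0"
  shows "\<exists>B\<in>events. prob B \<le> (2 * \<rho> * CARD('k) * m + 3) ^ CARD('k) * (6 * fb) ^ (2 * CARD('k) + 1) / n \<and>
    (\<forall>\<omega>\<in>space M - B. bounded_sample \<omega> \<longrightarrow>
      (\<forall>\<theta>\<in>cball \<theta>0 \<rho>. card {i\<in>{..<n}. \<bar>Y i \<omega> - W i \<omega> \<bullet> \<theta>\<bar> < 1 / (real n)\<^sup>2} \<le> 2 * CARD('k)))"
proof -
  \<comment> \<open>2k + 1 draws within 2/n^2 of a fixed hyperplane have probability O(n^(2k+1) n^(-2(2k+1))), and a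
    net of mesh 1/(m n^2) has O(n^(2k)) points, so the union bound is O(1/n).\<close>
  define K where "K = 2 * CARD('k) + 1"
  define x where "x = real n"
  define r where "r = 1 / x\<^sup>2"
  have x: "x \<ge> 1" using n by (simp add: x_def)
  have r: "r > 0" and rm: "r / m > 0" using x m_pos by (simp_all add: r_def)
  obtain N where N: "finite N" "real (card N) \<le> (2 * \<rho> * CARD('k) / (r / m) + 3) ^ CARD('k)"
      "\<And>\<theta>. \<theta> \<in> cball \<theta>0 \<rho> \<Longrightarrow> \<exists>g\<in>N. norm (\<theta> - g) \<le> r / m"
    using cball_finite_net[OF rm \<rho>, where c = \<theta>0] by blast
  define good_event where "good_event g U \<longleftrightarrow> U \<in> events \<and>
    {\<omega>\<in>space M. K \<le> card {i\<in>{..<n}. \<bar>Y i \<omega> - W i \<omega> \<bullet> g\<bar> \<le> 2 * r}} \<subseteq> U \<and>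
    prob U \<le> x ^ K * (6 * fb / x\<^sup>2) ^ K" for g U
  have "3 * fb * (2 * r) = 6 * fb / x\<^sup>2" using x by (simp add: r_def field_simps)
  then have "\<forall>g. \<exists>U. good_event g U"
    using prob_many_near_hyperplane_le[of "2 * r" K n] r by (auto simp: good_event_def K_def x_def)
  then obtain U where U: "\<And>g. good_event g (U g)" by (metis choice)
  have prob_B: "prob (\<Union>g\<in>N. U g) \<le> (2 * \<rho> * CARD('k) * m + 3) ^ CARD('k) * (6 * fb) ^ K / x"
  proof -
    have "prob (\<Union>g\<in>N. U g) \<le> (\<Sum>g\<in>N. prob (U g))"
      using N(1) U by (intro finite_measure_subadditive_finite) (auto simp: good_event_def)
    also have "\<dots> \<le> (\<Sum>g\<in>N. x ^ K * (6 * fb / x\<^sup>2) ^ K)"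
      using U by (intro sum_mono) (simp add: good_event_def)
    also have "\<dots> = real (card N) * (x ^ K * (6 * fb / x\<^sup>2) ^ K)" by simp
    also have "\<dots> \<le> ((2 * \<rho> * CARD('k) * m + 3) * x\<^sup>2) ^ CARD('k) * (x ^ K * (6 * fb / x\<^sup>2) ^ K)"
    proof (rule mult_right_mono)
      have "2 * \<rho> * CARD('k) / (r / m) + 3 = 2 * \<rho> * CARD('k) * m * x\<^sup>2 + 3"
        using m_pos x by (simp add: r_def field_simps)
      also have "\<dots> \<le> (2 * \<rho> * CARD('k) * m + 3) * x\<^sup>2"
        using x by (simp add: algebra_simps one_le_power)
      finally have "(2 * \<rho> * CARD('k) / (r / m) + 3) ^ CARD('k) \<le> ((2 * \<rho> * CARD('k) * m + 3) * x\<^sup>2) ^ CARD('k)"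
        using \<rho> r m_pos by (intro power_mono) auto
      then show "real (card N) \<le> ((2 * \<rho> * CARD('k) * m + 3) * x\<^sup>2) ^ CARD('k)" using N(2) by linarith
    qed (use fb_nonneg x in simp)
    also have "\<dots> = (2 * \<rho> * CARD('k) * m + 3) ^ CARD('k) * (6 * fb) ^ K / x"
      using x unfolding K_def by (intro union_bound_power_eq) simp
    finally show ?thesis .
  qed
  have "card {i\<in>{..<n}. \<bar>Y i \<omega> - W i \<omega> \<bullet> \<theta>\<bar> < 1 / (real n)\<^sup>2} \<le> 2 * CARD('k)"
    if \<omega>: "\<omega> \<in> space M - (\<Union>g\<in>N. U g)" "bounded_sample \<omega>" and \<theta>: "\<theta> \<in> cball \<theta>0 \<rho>" for \<omega> \<theta>
  proof -
    obtain g where "g \<in> N" and g: "norm (\<theta> - g) \<le> r / m" using N(3)[OF \<theta>] by blast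
    have "card {i\<in>{..<n}. \<bar>Y i \<omega> - W i \<omega> \<bullet> \<theta>\<bar> < 1 / (real n)\<^sup>2}
        \<le> card {i\<in>{..<n}. \<bar>Y i \<omega> - W i \<omega> \<bullet> g\<bar> \<le> 2 * r}"
      using near_subset_near_net_point[OF \<omega>(2) g, of n] by (intro card_mono) (auto simp: r_def x_def)
    moreover have "\<not> K \<le> card {i\<in>{..<n}. \<bar>Y i \<omega> - W i \<omega> \<bullet> g\<bar> \<le> 2 * r}"
      using U[of g] \<omega> \<open>g \<in> N\<close> by (auto simp: good_event_def)
    ultimately show ?thesis by (simp add: K_def)
  qed
  moreover have "(\<Union>g\<in>N. U g) \<in> events"
    using N(1) U by (intro sets.finite_UN) (auto simp: good_event_def)
  ultimately show ?thesis
    using prob_B by (intro bexI[of _ "\<Union>g\<in>N. U g"]) (auto simp: K_def x_def)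
qed

lemma few_near_hyperplane_wpa1:
  assumes "\<rho> > 0"
  shows "holds_wpa1 M (\<lambda>n \<omega>. \<forall>\<theta>\<in>cball \<theta>0 \<rho>.
     card {i\<in>{..<n}. \<bar>Y i \<omega> - W i \<omega> \<bullet> \<theta>\<bar> < 1 / (real n)\<^sup>2} \<le> 2 * CARD('k))"
proof -
  have "\<forall>\<^sub>F n in sequentially. \<exists>B\<in>events.
      prob B \<le> (2 * \<rho> * CARD('k) * m + 3) ^ CARD('k) * (6 * fb) ^ (2 * CARD('k) + 1) / n \<and>
      (\<forall>\<omega>\<in>space M - B. bounded_sample \<omega> \<longrightarrow>
        (\<forall>\<theta>\<in>cball \<theta>0 \<rho>. card {i\<in>{..<n}. \<bar>Y i \<omega> - W i \<omega> \<bullet> \<theta>\<bar> < 1 / (real n)\<^sup>2} \<le> 2 * CARD('k)))"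
    using eventually_gt_at_top[of 0] by eventually_elim (rule few_near_hyperplane_at[OF assms])
  then have "holds_wpa1 M (\<lambda>n \<omega>. bounded_sample \<omega> \<longrightarrow>
      (\<forall>\<theta>\<in>cball \<theta>0 \<rho>. card {i\<in>{..<n}. \<bar>Y i \<omega> - W i \<omega> \<bullet> \<theta>\<bar> < 1 / (real n)\<^sup>2} \<le> 2 * CARD('k)))"
    by (rule holds_wpa1I[OF lim_const_over_n])
  then have "holds_wpa1 M (\<lambda>n \<omega>. bounded_sample \<omega> \<and> (bounded_sample \<omega> \<longrightarrow>
      (\<forall>\<theta>\<in>cball \<theta>0 \<rho>. card {i\<in>{..<n}. \<bar>Y i \<omega> - W i \<omega> \<bullet> \<theta>\<bar> < 1 / (real n)\<^sup>2} \<le> 2 * CARD('k))))"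
    by (rule holds_wpa1_conj[OF holds_wpa1_AE[OF AE_bounded_sample]])
  then show ?thesis by (rule holds_wpa1_mono) (intro always_eventually, blast)
qed

lemma gn_smooth_close_wpa1:
  assumes \<rho>: "\<rho> > 0" and \<eta>: "\<eta> > 0"
  shows "holds_wpa1 M (\<lambda>n \<omega>. \<forall>\<theta>\<in>cball \<theta>0 \<rho>.
     norm (gn_smooth n \<omega> \<theta> - gp \<theta>) \<le> \<eta> \<and> norm (gn n \<theta> \<omega> - gn_smooth n \<omega> \<theta>) \<le> 2 * real CARD('k) * m / n)"
proof -
  have "holds_wpa1 M (\<lambda>n \<omega>. bounded_sample \<omega> \<and> (\<forall>\<theta>\<in>cball \<theta>0 \<rho>. norm (gn n \<theta> \<omega> - gp \<theta>) \<le> \<eta> / 2) \<and>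
      (\<forall>\<theta>\<in>cball \<theta>0 \<rho>. card {i\<in>{..<n}. \<bar>Y i \<omega> - W i \<omega> \<bullet> \<theta>\<bar> < 1 / (real n)\<^sup>2} \<le> 2 * CARD('k)))"
    using \<rho> \<eta> by (intro holds_wpa1_conj holds_wpa1_AE AE_bounded_sample ghat_uniform_wpa1
        few_near_hyperplane_wpa1) auto
  moreover have "\<forall>\<^sub>F n in sequentially. 2 * real CARD('k) * m / n < \<eta> / 2"
    using \<eta> by (intro order_tendstoD(2)[OF lim_const_over_n]) auto
  ultimately show ?thesis
  proof (rule holds_wpa1_mono[OF _ eventually_mono], intro ballI impI)
    fix n \<omega> \<theta>
    assume small: "2 * real CARD('k) * m / n < \<eta> / 2" and "\<omega> \<in> space M"
      and good: "bounded_sample \<omega> \<and> (\<forall>\<theta>\<in>cball \<theta>0 \<rho>. norm (gn n \<theta> \<omega> - gp \<theta>) \<le> \<eta> / 2) \<and>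
      (\<forall>\<theta>\<in>cball \<theta>0 \<rho>. card {i\<in>{..<n}. \<bar>Y i \<omega> - W i \<omega> \<bullet> \<theta>\<bar> < 1 / (real n)\<^sup>2} \<le> 2 * CARD('k))"
      and \<theta>: "\<theta> \<in> cball \<theta>0 \<rho>"
    have "norm (gn n \<theta> \<omega> - gn_smooth n \<omega> \<theta>) \<le> m / n * card {i\<in>{..<n}. \<bar>Y i \<omega> - W i \<omega> \<bullet> \<theta>\<bar> < 1 / (real n)\<^sup>2}"
      using good by (intro ghat_minus_gn_smooth_le) blast
    also have "\<dots> \<le> m / n * real (2 * CARD('k))"
    proof (rule mult_left_mono)
      have "card {i\<in>{..<n}. \<bar>Y i \<omega> - W i \<omega> \<bullet> \<theta>\<bar> < 1 / (real n)\<^sup>2} \<le> 2 * CARD('k)"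
        using good \<theta> by blast
      then show "real (card {i\<in>{..<n}. \<bar>Y i \<omega> - W i \<omega> \<bullet> \<theta>\<bar> < 1 / (real n)\<^sup>2}) \<le> real (2 * CARD('k))"
        by (rule of_nat_mono)
    qed (use m_pos in simp)
    finally have smoothing: "norm (gn n \<theta> \<omega> - gn_smooth n \<omega> \<theta>) \<le> 2 * real CARD('k) * m / n" by (simp add: mult_ac)
    have "norm (gn_smooth n \<omega> \<theta> - gn n \<theta> \<omega>) \<le> 2 * real CARD('k) * m / n"
      using smoothing by (simp add: norm_minus_commute)
    moreover have "norm (gn n \<theta> \<omega> - gp \<theta>) \<le> \<eta> / 2" using good \<theta> by blast
    ultimately have "norm (gn_smooth n \<omega> \<theta> - gp \<theta>) \<le> 2 * real CARD('k) * m / n + \<eta> / 2"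
      by (rule norm_diff_triangle_le)
    with smoothing small show "norm (gn_smooth n \<omega> \<theta> - gp \<theta>) \<le> \<eta> \<and> norm (gn n \<theta> \<omega> - gn_smooth n \<omega> \<theta>) \<le> 2 * real CARD('k) * m / n"
      by linarith
  qed
qed

lemma estimator_moment_bound_wpa1:
  fixes G :: "real^'k^'k" and \<theta>hat :: "nat \<Rightarrow> 'a \<Rightarrow> real^'k"
  assumes deriv: "(gp has_derivative (\<lambda>h. G *v h)) (at \<theta>0)" and rank: "rank G = CARD('k)"
    and zero: "gp \<theta>0 = 0" and int: "\<theta>0 \<in> interior \<Theta>" and p: "1 \<le> p"
    and est_in: "\<And>n \<omega>. \<omega> \<in> space M \<Longrightarrow> \<theta>hat n \<omega> \<in> \<Theta>"
    and est_min: "\<And>n \<omega> \<theta>. \<omega> \<in> space M \<Longrightarrow> \<theta> \<in> \<Theta> \<Longrightarrow>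
        lp_norm p (gn n (\<theta>hat n \<omega>) \<omega>) \<le> lp_norm p (gn n \<theta> \<omega>)"
  shows "holds_wpa1 M (\<lambda>n \<omega>. norm (gn n (\<theta>hat n \<omega>) \<omega>) \<le> 2 * real CARD('k) ^ 3 * m / n)"
proof -
  have "inj ((*v) G)" using rank full_rank_injective by blast
  then obtain d c where d: "d > 0" and c: "c > 0" and zero_near: "\<And>\<rho> h. 0 < \<rho> \<Longrightarrow> \<rho> < d \<Longrightarrow>
      continuous_on (cball \<theta>0 \<rho>) h \<Longrightarrow> (\<And>x. x \<in> cball \<theta>0 \<rho> \<Longrightarrow> norm (h x - gp x) \<le> c * \<rho>) \<Longrightarrow>
      \<exists>x\<in>cball \<theta>0 \<rho>. h x = 0"
    using zero_of_continuous_perturbation[OF deriv _ zero] by blast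
  obtain e where e: "e > 0" "cball \<theta>0 e \<subseteq> \<Theta>" using int mem_interior_cball by blast
  define \<rho> where "\<rho> = min e (d / 2)"
  have \<rho>: "0 < \<rho>" "\<rho> < d" "cball \<theta>0 \<rho> \<subseteq> \<Theta>" using e d by (auto simp: \<rho>_def)
  have "holds_wpa1 M (\<lambda>n \<omega>. \<forall>\<theta>\<in>cball \<theta>0 \<rho>.
      norm (gn_smooth n \<omega> \<theta> - gp \<theta>) \<le> c * \<rho> \<and> norm (gn n \<theta> \<omega> - gn_smooth n \<omega> \<theta>) \<le> 2 * real CARD('k) * m / n)"
    using \<rho> c by (intro gn_smooth_close_wpa1) auto
  then show ?thesis
  proof (rule holds_wpa1_mono, intro always_eventually allI ballI impI)
    fix n :: nat and \<omega> assume \<omega>: "\<omega> \<in> space M" and close: "\<forall>\<theta>\<in>cball \<theta>0 \<rho>.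
      norm (gn_smooth n \<omega> \<theta> - gp \<theta>) \<le> c * \<rho> \<and> norm (gn n \<theta> \<omega> - gn_smooth n \<omega> \<theta>) \<le> 2 * real CARD('k) * m / n"
    obtain \<theta>s where \<theta>s: "\<theta>s \<in> cball \<theta>0 \<rho>" "gn_smooth n \<omega> \<theta>s = 0"
      using zero_near[OF \<rho>(1,2) continuous_on_gn_smooth] close by blast
    define k where "k = real CARD('k)"
    have "norm (gn n (\<theta>hat n \<omega>) \<omega>) \<le> k * lp_norm p (gn n (\<theta>hat n \<omega>) \<omega>)"
      unfolding k_def by (rule norm_le_card_mult_lp_norm[OF p])
    also have "\<dots> \<le> k * lp_norm p (gn n \<theta>s \<omega>)"
      using est_min[OF \<omega>] \<theta>s \<rho>(3) by (intro mult_left_mono) (auto simp: k_def)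
    also have "\<dots> \<le> k * (k * norm (gn n \<theta>s \<omega>))"
      unfolding k_def by (intro mult_left_mono lp_norm_le_card_mult_norm[OF p]) simp
    also have "\<dots> \<le> k * (k * (2 * k * m / n))"
    proof -
      have "norm (gn n \<theta>s \<omega> - gn_smooth n \<omega> \<theta>s) \<le> 2 * k * m / n"
        using close \<theta>s(1) by (auto simp: k_def)
      then show ?thesis using \<theta>s(2) by (intro mult_left_mono) (auto simp: k_def)
    qed
    finally show "norm (gn n (\<theta>hat n \<omega>) \<omega>) \<le> 2 * real CARD('k) ^ 3 * m / n"
      by (simp add: k_def power3_eq_cube mult_ac)
  qed
qed

end

theorem lemma12:
  fixes M :: "'a measure"
    and Y :: "nat \<Rightarrow> 'a \<Rightarrow> real"
    and W Z :: "nat \<Rightarrow> 'a \<Rightarrow> real^'k"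
    and tau :: real and \<Theta> :: "(real^'k) set" and \<theta>0 :: "real^'k"
    and G :: "real^'k^'k"
    and m fbar :: real and s :: nat and dirs :: "(real^'k) set"
    and f :: "real^'k \<Rightarrow> real^'k \<Rightarrow> real \<Rightarrow> real"
    and p :: ereal
    and \<theta>hat :: "nat \<Rightarrow> 'a \<Rightarrow> real^'k"
  assumes P: "prob_space M"
    and indep: "prob_space.indep_vars M (\<lambda>_. borel) (\<lambda>i \<omega>. (Y i \<omega>, W i \<omega>, Z i \<omega>)) UNIV"
    and ident: "\<And>i. distr M borel (\<lambda>\<omega>. (Y i \<omega>, W i \<omega>, Z i \<omega>)) = distr M borel (\<lambda>\<omega>. (Y 0 \<omega>, W 0 \<omega>, Z 0 \<omega>))"
    and tau: "0 < tau" "tau < 1"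
    \<comment> \<open>Assumption 1.1\<close>
    and cpt: "compact \<Theta>"
    and int: "\<theta>0 \<in> interior \<Theta>"
    and zero: "gpop M tau (Y 0) (W 0) (Z 0) \<theta>0 = 0"
    and uniq: "\<And>\<theta>. \<theta> \<in> \<Theta> \<Longrightarrow> gpop M tau (Y 0) (W 0) (Z 0) \<theta> = 0 \<Longrightarrow> \<theta> = \<theta>0"
    \<comment> \<open>Assumption 1.2\<close>
    and deriv: "(gpop M tau (Y 0) (W 0) (Z 0) has_derivative (\<lambda>h. G *v h)) (at \<theta>0)"
    and fullrank: "rank G = CARD('k)"
    \<comment> \<open>Assumption 2.1\<close>
    and bndZ: "AE \<omega> in M. norm (Z 0 \<omega>) < m"
    and bndW: "AE \<omega> in M. norm (W 0 \<omega>) < m"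
    \<comment> \<open>Assumption 2.2\<close>
    and dirs: "finite dirs" "card dirs = s"
    and Wdir: "AE \<omega> in M. norm (W 0 \<omega>) > 0 \<and> W 0 \<omega> /\<^sub>R norm (W 0 \<omega>) \<in> dirs"
    \<comment> \<open>Assumption 3.1: conditional density of Y given (W,Z)\<close>
    and f_meas: "(\<lambda>(w, z, y). f w z y) \<in> borel_measurable borel"
    and f_nonneg: "\<And>w z y. f w z y \<ge> 0"
    and f_dens: "\<And>A B. A \<in> sets borel \<Longrightarrow> B \<in> sets borel \<Longrightarrow>
        measure M {\<omega>\<in>space M. (W 0 \<omega>, Z 0 \<omega>) \<in> A \<and> Y 0 \<omega> \<in> B}
        = integral\<^sup>L M (\<lambda>\<omega>. indicator A (W 0 \<omega>, Z 0 \<omega>) * (LINT y:B|lborel. f (W 0 \<omega>) (Z 0 \<omega>) y))"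
    and f_bnd: "AE \<omega> in M. \<forall>y\<in>rv_support M (Y 0). f (W 0 \<omega>) (Z 0 \<omega>) y \<le> fbar"
    \<comment> \<open>Assumption 3.2\<close>
    and f_C2: "AE \<omega> in M. C2_on (rv_support M (Y 0)) (f (W 0 \<omega>) (Z 0 \<omega>))"
    \<comment> \<open>the estimator: measurable minimiser of the l_p norm of ghat over Theta\<close>
    and p: "1 \<le> p"
    and est_meas: "\<And>n. \<theta>hat n \<in> borel_measurable M"
    and est_in: "\<And>n \<omega>. \<omega> \<in> space M \<Longrightarrow> \<theta>hat n \<omega> \<in> \<Theta>"
    and est_min: "\<And>n \<omega> \<theta>. \<omega> \<in> space M \<Longrightarrow> \<theta> \<in> \<Theta> \<Longrightarrow>
        lp_norm p (ghat tau Y W Z n (\<theta>hat n \<omega>) \<omega>) \<le> lp_norm p (ghat tau Y W Z n \<theta> \<omega>)"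
  shows "\<exists>\<gamma>0>0. \<forall>\<gamma>. 0 < \<gamma> \<and> \<gamma> < \<gamma>0 \<longrightarrow>
     bigOp M (\<lambda>n \<omega>. ghat tau Y W Z n (\<theta>hat n \<omega>) \<omega>)
       (\<lambda>n. m ^ 3 * (real s) ^ 2 / (real n) powr (1 - \<gamma>))"
proof -
  interpret prob_space M by (rule P)
  have "AE \<omega> in M. 0 < m" using bndZ by eventually_elim (metis norm_ge_zero order_le_less_trans)
  then have m: "m > 0" by simp
  have "AE \<omega> in M. dirs \<noteq> {}" using Wdir by eventually_elim auto
  then have "card dirs \<ge> 1" using dirs(1) by (simp add: Suc_leI card_gt_0_iff)
  then have s: "real s \<ge> 1" using dirs(2) by simp
  have f_bnd': "AE \<omega> in M. \<forall>y\<in>rv_support M (Y 0). f (W 0 \<omega>) (Z 0 \<omega>) y \<le> max fbar 0"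
    using f_bnd by eventually_elim (auto simp: le_max_iff_disj)
  interpret qr_moment_model M Y W Z m "max fbar 0" tau
  proof unfold_locales
    interpret iid_sample M Y W Z by unfold_locales (fact indep ident)+
    show "prob {\<omega>\<in>space M. \<bar>Y 0 \<omega> - W 0 \<omega> \<bullet> \<theta>\<bar> \<le> \<delta>} \<le> 3 * max fbar 0 * \<delta>" if "\<delta> > 0" for \<theta> \<delta>
      by (rule prob_near_hyperplane_le[OF measurable_sample bndW f_dens f_bnd' _ that]) (auto simp: le_max_iff_disj)
  qed (use indep ident tau m bndZ bndW in auto)
  have rate: "holds_wpa1 M (\<lambda>n \<omega>. norm (ghat tau Y W Z n (\<theta>hat n \<omega>) \<omega>) \<le> 2 * real CARD('k) ^ 3 * m / n)"
    by (rule estimator_moment_bound_wpa1[OF deriv fullrank zero int p est_in est_min])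
  moreover have "0 < m ^ 3 * (real s)\<^sup>2" using m s by simp
  ultimately show ?thesis
    using m by (intro exI[of _ 1]) (auto intro: bigOp_powr_rate)
qed

end
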